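(* Let $N$ be a $4$-dimensional Riemannian space form of constant sectional curvature $L_0$, with metric $h$ and Levi-Civita connection $\nabla$. Let $M$ be a Riemann surface and $F:M\to N$ a conformal immersion. Let $(u,v)$ be local isothermal coordinates on $M$ compatible with the complex structure, so that the induced metric is $g=e^{2\lambda}(du^2+dv^2)$ for a real-valued function $\lambda$. Put $T_1=dF(\partial/\partial u)$, $T_2=dF(\partial/\partial v)$, and let $N_1,N_2$ be normal vector fields along $F$ with $h(N_1,N_1)=h(N_2,N_2)=e^{2\lambda}$, $h(N_1,N_2)=0$. Define real-valued functions $\alpha_k,\beta_k$ ($k=1,2,3$), $\mu_1,\mu_2$ by $$\sigma(T_1,T_1)=\alpha_1N_1+\beta_1N_2,\quad \sigma(T_1,T_2)=\alpha_2N_1+\beta_2N_2,\quad \sigma(T_2,T_2)=\alpha_3N_1+\beta_3N_2,$$ $$\nabla^{\perp}_{\partial/\partial u}N_1=\lambda_uN_1+\mu_1N_2,\qquad \nabla^{\perp}_{\partial/\partial v}N_1=\lambda_vN_1+\mu_2N_2,$$ where $\sigma$ is the second fundamental form and $\nabla^\perp$ the normal connection of $F$ (the $N_1$-coefficients are necessarily $\lambda_u,\lambda_v$). Set $$W_{\pm}=\alpha_2\pm\beta_1,\quad X_{\pm}=\alpha_2\pm\beta_3,\quad Y_{\pm}=\beta_2\pm\alpha_1,\quad Z_{\pm}=\beta_2\pm\alpha_3,\quad \phi_{\pm}=\lambda_u\mp\mu_2,\quad \psi_{\pm}=\lambda_v\mp\mu_1.$$ Then $$W_++W_-=X_++X_-,\qquad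 Y_++Y_-=Z_++Z_-,$$ and, for each choice of signs (upper signs throughout, or lower signs throughout), $$W_{\mp}X_{\pm}+Y_{\pm}Z_{\mp}=L_0e^{2\lambda}+(\phi_{\pm})_u+(\psi_{\mp})_v,$$ $$(Y_{\pm})_v\mp(X_{\pm})_u=\pm W_{\mp}\phi_{\pm}-Z_{\mp}\psi_{\mp},\qquad (W_{\mp})_v\pm(Z_{\mp})_u=\mp Y_{\pm}\phi_{\pm}-X_{\pm}\psi_{\mp}.$$
   Context: All objects are smooth. Subscripts $u,v$ denote partial derivatives. *)

theory Defs
  imports "HOL-Analysis.Analysis"
begin

definition dd :: "'a::real_normed_vector \<Rightarrow> ('a \<Rightarrow> real) \<Rightarrow> 'a \<Rightarrow> real" where
  "dd b f x = deriv (\<lambda>t. f (x + t *\<^sub>R b)) 0"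

fun iterd :: "'a::real_normed_vector list \<Rightarrow> ('a \<Rightarrow> real) \<Rightarrow> 'a \<Rightarrow> real" where
  "iterd [] f = f"
| "iterd (b # bs) f = dd b (iterd bs f)"

definition Cinf_on :: "'a::euclidean_space set \<Rightarrow> ('a \<Rightarrow> real) \<Rightarrow> bool" where
  "Cinf_on U f \<longleftrightarrow> (\<forall>bs. set bs \<subseteq> Basis \<longrightarrow>
      continuous_on U (iterd bs f) \<and>
      (\<forall>b\<in>Basis. \<forall>x\<in>U. (\<lambda>t. iterd bs f (x + t *\<^sub>R b)) differentiable (at 0)))"

definition pu :: "(real \<times> real \<Rightarrow> real) \<Rightarrow> real \<times> real \<Rightarrow> real" where
  "pu f = dd (1, 0) f"
definition pv :: "(real \<times> real \<Rightarrow> real) \<Rightarrow> real \<times> real \<Rightarrow> real" where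
  "pv f = dd (0, 1) f"

definition dvec :: "real \<times> real \<Rightarrow> (real \<times> real \<Rightarrow> real^4) \<Rightarrow> real \<times> real \<Rightarrow> real^4" where
  "dvec b W p = (\<chi> k. dd b (\<lambda>q. W q $ k) p)"

type_synonym metric4 = "real^4 \<Rightarrow> 4 \<Rightarrow> 4 \<Rightarrow> real"

definition hin :: "metric4 \<Rightarrow> real^4 \<Rightarrow> real^4 \<Rightarrow> real^4 \<Rightarrow> real" where
  "hin h x X Y = (\<Sum>i\<in>UNIV. \<Sum>j\<in>UNIV. h x i j * X $ i * Y $ j)"

definition riemannian_metric_on :: "(real^4) set \<Rightarrow> metric4 \<Rightarrow> bool" where
  "riemannian_metric_on V h \<longleftrightarrow>
     (\<forall>i j. Cinf_on V (\<lambda>x. h x i j)) \<and>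
     (\<forall>x\<in>V. \<forall>i j. h x i j = h x j i) \<and>
     (\<forall>x\<in>V. \<forall>X. X \<noteq> 0 \<longrightarrow> hin h x X X > 0)"

definition hinv :: "metric4 \<Rightarrow> real^4 \<Rightarrow> 4 \<Rightarrow> 4 \<Rightarrow> real" where
  "hinv h x k l = matrix_inv (\<chi> i j. h x i j) $ k $ l"

definition d4 :: "4 \<Rightarrow> (real^4 \<Rightarrow> real) \<Rightarrow> real^4 \<Rightarrow> real" where
  "d4 i f x = dd (axis i 1) f x"

definition Gam :: "metric4 \<Rightarrow> real^4 \<Rightarrow> 4 \<Rightarrow> 4 \<Rightarrow> 4 \<Rightarrow> real" where
  "Gam h x k i j = (1/2) * (\<Sum>l\<in>UNIV. hinv h x k l *
      (d4 i (\<lambda>y. h y j l) x + d4 j (\<lambda>y. h y i l) x - d4 l (\<lambda>y. h y i j) x))"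

text \<open>Riemann curvature components: R(d_i,d_j)d_k = sum_l Rc l i j k d_l, with
  R(X,Y) = nabla_X nabla_Y - nabla_Y nabla_X - nabla_[X,Y].\<close>
definition Rc :: "metric4 \<Rightarrow> real^4 \<Rightarrow> 4 \<Rightarrow> 4 \<Rightarrow> 4 \<Rightarrow> 4 \<Rightarrow> real" where
  "Rc h x l i j k = d4 i (\<lambda>y. Gam h y l j k) x - d4 j (\<lambda>y. Gam h y l i k) x
     + (\<Sum>m\<in>UNIV. Gam h x l i m * Gam h x m j k - Gam h x l j m * Gam h x m i k)"

definition Rvec :: "metric4 \<Rightarrow> real^4 \<Rightarrow> real^4 \<Rightarrow> real^4 \<Rightarrow> real^4 \<Rightarrow> real^4" where
  "Rvec h x X Y Z = (\<chi> l. \<Sum>i\<in>UNIV. \<Sum>j\<in>UNIV. \<Sum>k\<in>UNIV. Rc h x l i j k * X $ i * Y $ j * Z $ k)"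

definition sectional_curvature :: "metric4 \<Rightarrow> real^4 \<Rightarrow> real^4 \<Rightarrow> real^4 \<Rightarrow> real" where
  "sectional_curvature h x X Y =
     hin h x (Rvec h x X Y Y) X / (hin h x X X * hin h x Y Y - (hin h x X Y)^2)"

definition constant_sectional_curvature_on :: "(real^4) set \<Rightarrow> metric4 \<Rightarrow> real \<Rightarrow> bool" where
  "constant_sectional_curvature_on V h L0 \<longleftrightarrow>
     (\<forall>x\<in>V. \<forall>X Y. (\<forall>a b. a *\<^sub>R X + b *\<^sub>R Y = 0 \<longrightarrow> a = 0 \<and> b = 0)
        \<longrightarrow> sectional_curvature h x X Y = L0)"

definition T1 :: "(real \<times> real \<Rightarrow> real^4) \<Rightarrow> real \<times> real \<Rightarrow> real^4" where
  "T1 F = dvec (1, 0) F"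
definition T2 :: "(real \<times> real \<Rightarrow> real^4) \<Rightarrow> real \<times> real \<Rightarrow> real^4" where
  "T2 F = dvec (0, 1) F"

definition Dcov :: "metric4 \<Rightarrow> (real \<times> real \<Rightarrow> real^4) \<Rightarrow> real \<times> real
    \<Rightarrow> (real \<times> real \<Rightarrow> real^4) \<Rightarrow> real \<times> real \<Rightarrow> real^4" where
  "Dcov h F b W p = dvec b W p +
     (\<chi> k. \<Sum>a\<in>UNIV. \<Sum>c\<in>UNIV. Gam h (F p) k a c * dvec b F p $ a * W p $ c)"

definition tang :: "metric4 \<Rightarrow> (real \<times> real \<Rightarrow> real^4) \<Rightarrow> real \<times> real \<Rightarrow> real^4 \<Rightarrow> real^4" where
  "tang h F p W =
    (let x = F p; A = T1 F p; B = T2 F p;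
         g11 = hin h x A A; g12 = hin h x A B; g22 = hin h x B B;
         a1 = hin h x W A; a2 = hin h x W B; dt = g11 * g22 - g12^2
     in ((g22 * a1 - g12 * a2) / dt) *\<^sub>R A + ((g11 * a2 - g12 * a1) / dt) *\<^sub>R B)"

definition nor :: "metric4 \<Rightarrow> (real \<times> real \<Rightarrow> real^4) \<Rightarrow> real \<times> real \<Rightarrow> real^4 \<Rightarrow> real^4" where
  "nor h F p W = W - tang h F p W"

definition sff :: "metric4 \<Rightarrow> (real \<times> real \<Rightarrow> real^4) \<Rightarrow> real \<times> real
    \<Rightarrow> (real \<times> real \<Rightarrow> real^4) \<Rightarrow> real \<times> real \<Rightarrow> real^4" where
  "sff h F b Tj p = nor h F p (Dcov h F b Tj p)"

definition ncon :: "metric4 \<Rightarrow> (real \<times> real \<Rightarrow> real^4) \<Rightarrow> real \<times> real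
    \<Rightarrow> (real \<times> real \<Rightarrow> real^4) \<Rightarrow> real \<times> real \<Rightarrow> real^4" where
  "ncon h F b N p = nor h F p (Dcov h F b N p)"

end

theory Submission
  imports Defs
begin

text \<open>The frame \<open>T1, T2, N1, N2\<close> is orthogonal with all squared lengths \<open>e\<^sup>2\<^sup>\<lambda>\<close>. Differentiating
  the frame covariantly gives the Gauss and Weingarten formulas, whose coefficients are
  \<open>\<lambda>\<^sub>u, \<lambda>\<^sub>v\<close> and the \<open>\<alpha>\<^sub>k, \<beta>\<^sub>k, \<mu>\<^sub>k\<close>. Computing \<open>h(\<nabla>\<^sub>u\<nabla>\<^sub>v A - \<nabla>\<^sub>v\<nabla>\<^sub>u A, B)\<close> for pairs of frame fields
  in two ways, once by differentiating these coefficients and once through the curvature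
  \<open>R(X,Y)Z = L\<^sub>0 (h(Y,Z) X - h(X,Z) Y)\<close> of the space form, yields the Gauss, Codazzi and Ricci
  equations; the stated identities are their sums and differences for the two choices of sign.\<close>

definition has_dd :: "('a::real_normed_vector \<Rightarrow> real) \<Rightarrow> 'a \<Rightarrow> 'a \<Rightarrow> real \<Rightarrow> bool" where
  "has_dd f b q D \<longleftrightarrow> ((\<lambda>t. f (q + t *\<^sub>R b)) has_real_derivative D) (at 0)"

lemma has_dd_imp_dd: "has_dd f b q D \<Longrightarrow> dd b f q = D"
  unfolding has_dd_def dd_def by (rule DERIV_imp_deriv)

lemma has_dd_const: "has_dd (\<lambda>q. c) b q 0"
  unfolding has_dd_def by (rule DERIV_const)

lemma has_dd_add: "has_dd f b q D \<Longrightarrow> has_dd g b q E \<Longrightarrow> has_dd (\<lambda>q. f q + g q) b q (D + E)"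
  unfolding has_dd_def by (rule DERIV_add)

lemma has_dd_diff: "has_dd f b q D \<Longrightarrow> has_dd g b q E \<Longrightarrow> has_dd (\<lambda>q. f q - g q) b q (D - E)"
  unfolding has_dd_def by (rule DERIV_diff)

lemma has_dd_minus: "has_dd f b q D \<Longrightarrow> has_dd (\<lambda>q. - f q) b q (- D)"
  unfolding has_dd_def by (rule DERIV_minus)

lemma has_dd_mult: "has_dd f b q D \<Longrightarrow> has_dd g b q E \<Longrightarrow> has_dd (\<lambda>q. f q * g q) b q (D * g q + f q * E)"
  unfolding has_dd_def
  by (drule (1) DERIV_mult) (simp add: mult.commute)

lemma has_dd_cmult: "has_dd f b q D \<Longrightarrow> has_dd (\<lambda>q. c * f q) b q (c * D)"
  unfolding has_dd_def by (rule DERIV_cmult)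

lemma dd_add_cmult:
  "has_dd f b p (dd b f p) \<Longrightarrow> has_dd g b p (dd b g p) \<Longrightarrow>
   dd b (\<lambda>q. f q + s * g q) p = dd b f p + s * dd b g p"
  by (intro has_dd_imp_dd has_dd_add has_dd_cmult)

lemma dd_diff_cmult:
  "has_dd f b p (dd b f p) \<Longrightarrow> has_dd g b p (dd b g p) \<Longrightarrow>
   dd b (\<lambda>q. f q - s * g q) p = dd b f p - s * dd b g p"
  by (intro has_dd_imp_dd has_dd_diff has_dd_cmult)

lemma has_dd_sum: "finite I \<Longrightarrow> (\<And>i. i \<in> I \<Longrightarrow> has_dd (f i) b q (D i)) \<Longrightarrow>
   has_dd (\<lambda>q. \<Sum>i\<in>I. f i q) b q (\<Sum>i\<in>I. D i)"
  unfolding has_dd_def by (rule DERIV_sum)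

lemma has_dd_compose: "has_dd f b q D \<Longrightarrow> (g has_real_derivative G) (at (f q)) \<Longrightarrow>
   has_dd (\<lambda>q. g (f q)) b q (G * D)"
  unfolding has_dd_def
  using DERIV_chain2[of g G "\<lambda>t. f (q + t *\<^sub>R b)" 0 D] by simp

lemma has_dd_exp: "has_dd f b q D \<Longrightarrow> has_dd (\<lambda>q. exp (f q)) b q (exp (f q) * D)"
  by (rule has_dd_compose) (auto intro: DERIV_exp)

lemma has_dd_divide: "has_dd f b q D \<Longrightarrow> has_dd g b q E \<Longrightarrow> g q \<noteq> 0 \<Longrightarrow>
   has_dd (\<lambda>q. f q / g q) b q ((D * g q - f q * E) / (g q * g q))"
  unfolding has_dd_def using DERIV_divide[of "\<lambda>t. f (q + t *\<^sub>R b)" D 0 UNIV "\<lambda>t. g (q + t *\<^sub>R b)" E] by simp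

lemma eventually_line_in_open: "open S \<Longrightarrow> (q::'a::real_normed_vector) \<in> S \<Longrightarrow> \<forall>\<^sub>F t in nhds (0::real). q + t *\<^sub>R b \<in> S"
proof -
  assume S: "open S" "q \<in> S"
  have "eventually (\<lambda>t. t \<in> (\<lambda>t::real. q + t *\<^sub>R b) -` S) (nhds 0)"
    using S by (intro eventually_nhds_in_open open_vimage) (auto intro!: continuous_intros)
  then show ?thesis by simp
qed

lemma has_dd_transform_open:
  assumes "open S" "q \<in> S" "\<And>y. y \<in> S \<Longrightarrow> f y = g y" "has_dd g b q D"
  shows "has_dd f b q D"
proof -
  have "\<forall>\<^sub>F t in nhds (0::real). f (q + t *\<^sub>R b) = g (q + t *\<^sub>R b)"
    using eventually_line_in_open[OF assms(1,2), of b] by (rule eventually_mono) (simp add: assms(3))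
  then show ?thesis using assms(4) unfolding has_dd_def
    by (subst DERIV_cong_ev[OF refl _ refl]) auto
qed

lemma dd_cong:
  assumes "open S" "q \<in> S" "\<And>y. y \<in> S \<Longrightarrow> f y = g y"
  shows "dd b f q = dd b g q"
proof -
  have "\<forall>\<^sub>F t in nhds (0::real). f (q + t *\<^sub>R b) = g (q + t *\<^sub>R b)"
    using eventually_line_in_open[OF assms(1,2), of b] by (rule eventually_mono) (simp add: assms(3))
  then have "\<And>D. ((\<lambda>t. f (q + t *\<^sub>R b)) has_real_derivative D) (at 0) \<longleftrightarrow>
                  ((\<lambda>t. g (q + t *\<^sub>R b)) has_real_derivative D) (at 0)"
    by (intro DERIV_cong_ev) auto
  then show ?thesis unfolding dd_def deriv_def by simp
qed

lemma iterd_append: "iterd (xs @ ys) f = iterd xs (iterd ys f)"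
  by (induction xs) auto

lemma Cinf_on_dd:
  assumes A: "Cinf_on S f" and b: "b \<in> Basis"
  shows "Cinf_on S (dd b f)"
  unfolding Cinf_on_def
proof (intro allI impI)
  fix bs :: "'a list" assume bs: "set bs \<subseteq> Basis"
  have e: "iterd bs (dd b f) = iterd (bs @ [b]) f" by (simp add: iterd_append)
  show "continuous_on S (iterd bs (dd b f)) \<and>
       (\<forall>ba\<in>Basis. \<forall>x\<in>S. (\<lambda>t. iterd bs (dd b f) (x + t *\<^sub>R ba)) differentiable at 0)"
    unfolding e using A[unfolded Cinf_on_def, rule_format, of "bs @ [b]"] b bs by auto
qed

lemma Cinf_on_imp_continuous_on: "Cinf_on S f \<Longrightarrow> continuous_on S f"
  unfolding Cinf_on_def by (metis empty_subsetI iterd.simps(1) list.set(1))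

lemma Cinf_on_has_dd: "Cinf_on S f \<Longrightarrow> b \<in> Basis \<Longrightarrow> q \<in> S \<Longrightarrow> has_dd f b q (dd b f q)"
  unfolding Cinf_on_def has_dd_def dd_def
  by (metis DERIV_deriv_iff_real_differentiable empty_subsetI iterd.simps(1) list.set(1))

lemma has_dd_shift:
  assumes "has_dd f b (q + t0 *\<^sub>R b) D"
  shows "((\<lambda>t. f (q + t *\<^sub>R b)) has_real_derivative D) (at t0)"
proof -
  have "((\<lambda>t. f (q + (t + t0) *\<^sub>R b)) has_real_derivative D) (at 0)"
    using assms unfolding has_dd_def by (simp add: scaleR_add_left add.assoc add.commute add.left_commute)
  then show ?thesis using DERIV_shift[of "\<lambda>t. f (q + t *\<^sub>R b)" D 0 t0] by simp
qed

lemma Cinf_on_DERIV_line: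
  "Cinf_on S f \<Longrightarrow> b \<in> Basis \<Longrightarrow> q + t0 *\<^sub>R b \<in> S \<Longrightarrow>
   ((\<lambda>t. f (q + t *\<^sub>R b)) has_real_derivative dd b f (q + t0 *\<^sub>R b)) (at t0)"
  by (rule has_dd_shift, rule Cinf_on_has_dd)

lemma Basis_real_pair[simp]: "(1::real, 0::real) \<in> Basis" "(0::real, 1::real) \<in> Basis"
  by (auto simp: Basis_prod_def)

section \<open>Symmetry of second derivatives\<close>

text \<open>The second difference \<open>g k k - g k 0 - g 0 k + g 0 0\<close> equals \<open>k\<^sup>2 g12\<close> and
  \<open>k\<^sup>2 g21\<close> at intermediate points (two applications of the mean value theorem each way), so
  continuity at the origin forces \<open>g12 0 0 = g21 0 0\<close>.\<close>

lemma mixed_partials_eq_core: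
  fixes g g1 g2 g12 g21 :: "real \<Rightarrow> real \<Rightarrow> real"
  assumes r: "r > 0"
  and d1: "\<And>s t. \<bar>s\<bar> < r \<Longrightarrow> \<bar>t\<bar> < r \<Longrightarrow> ((\<lambda>s. g s t) has_real_derivative g1 s t) (at s)"
  and d12: "\<And>s t. \<bar>s\<bar> < r \<Longrightarrow> \<bar>t\<bar> < r \<Longrightarrow> ((\<lambda>t. g1 s t) has_real_derivative g12 s t) (at t)"
  and d2: "\<And>s t. \<bar>s\<bar> < r \<Longrightarrow> \<bar>t\<bar> < r \<Longrightarrow> ((\<lambda>t. g s t) has_real_derivative g2 s t) (at t)"
  and d21: "\<And>s t. \<bar>s\<bar> < r \<Longrightarrow> \<bar>t\<bar> < r \<Longrightarrow> ((\<lambda>s. g2 s t) has_real_derivative g21 s t) (at s)"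
  and c12: "\<And>e. e > 0 \<Longrightarrow> \<exists>d>0. \<forall>s t. \<bar>s\<bar> < d \<longrightarrow> \<bar>t\<bar> < d \<longrightarrow> \<bar>g12 s t - g12 0 0\<bar> < e"
  and c21: "\<And>e. e > 0 \<Longrightarrow> \<exists>d>0. \<forall>s t. \<bar>s\<bar> < d \<longrightarrow> \<bar>t\<bar> < d \<longrightarrow> \<bar>g21 s t - g21 0 0\<bar> < e"
  shows "g12 0 0 = g21 0 0"
proof (rule ccontr)
  assume ne: "g12 0 0 \<noteq> g21 0 0"
  define e where "e = \<bar>g12 0 0 - g21 0 0\<bar> / 2"
  have e: "e > 0" using ne by (simp add: e_def)
  obtain d1' where d1': "d1' > 0" "\<forall>s t. \<bar>s\<bar> < d1' \<longrightarrow> \<bar>t\<bar> < d1' \<longrightarrow> \<bar>g12 s t - g12 0 0\<bar> < e"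
    using c12[OF e] by blast
  obtain d2' where d2': "d2' > 0" "\<forall>s t. \<bar>s\<bar> < d2' \<longrightarrow> \<bar>t\<bar> < d2' \<longrightarrow> \<bar>g21 s t - g21 0 0\<bar> < e"
    using c21[OF e] by blast
  define k where "k = min (min d1' d2') r / 2"
  have k: "0 < k" "k < d1'" "k < d2'" "k < r" using d1' d2' r by (auto simp: k_def)
  have "\<exists>z. 0 < z \<and> z < k \<and> (g k k - g k 0) - (g 0 k - g 0 0) = (k - 0) * (g1 z k - g1 z 0)"
    using k by (intro MVT2) (auto intro!: DERIV_diff d1)
  then obtain z where z: "0 < z" "z < k" "(g k k - g k 0) - (g 0 k - g 0 0) = k * (g1 z k - g1 z 0)"
    by auto
  have "\<exists>w. 0 < w \<and> w < k \<and> g1 z k - g1 z 0 = (k - 0) * g12 z w"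
    using k z by (intro MVT2) (auto intro!: d12)
  then obtain w where w: "0 < w" "w < k" "g1 z k - g1 z 0 = k * g12 z w" by auto
  have "\<exists>z. 0 < z \<and> z < k \<and> (g k k - g 0 k) - (g k 0 - g 0 0) = (k - 0) * (g2 k z - g2 0 z)"
    using k by (intro MVT2) (auto intro!: DERIV_diff d2)
  then obtain z' where z': "0 < z'" "z' < k" "(g k k - g 0 k) - (g k 0 - g 0 0) = k * (g2 k z' - g2 0 z')"
    by auto
  have "\<exists>w. 0 < w \<and> w < k \<and> g2 k z' - g2 0 z' = (k - 0) * g21 w z'"
    using k z' by (intro MVT2) (auto intro!: d21)
  then obtain w' where w': "0 < w'" "w' < k" "g2 k z' - g2 0 z' = k * g21 w' z'" by auto
  have "k * (k * g12 z w) = k * (k * g21 w' z')"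
    using z(3) w(3) z'(3) w'(3) by (metis (no_types, lifting) diff_diff_eq2 diff_add_eq add.commute)
  then have eq: "g12 z w = g21 w' z'" using k by simp
  have "\<bar>g12 z w - g12 0 0\<bar> < e" using d1'(2) z w k by auto
  moreover have "\<bar>g21 w' z' - g21 0 0\<bar> < e" using d2'(2) z' w' k by auto
  ultimately have "\<bar>g12 0 0 - g12 z w\<bar> + \<bar>g21 w' z' - g21 0 0\<bar> < \<bar>g12 0 0 - g21 0 0\<bar>"
    by (simp add: abs_minus_commute e_def)
  moreover have "g12 0 0 - g21 0 0 = (g12 0 0 - g12 z w) + (g21 w' z' - g21 0 0)" using eq by simp
  then have "\<bar>g12 0 0 - g21 0 0\<bar> \<le> \<bar>g12 0 0 - g12 z w\<bar> + \<bar>g21 w' z' - g21 0 0\<bar>"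
    by (simp only: abs_triangle_ineq)
  ultimately show False by linarith
qed

lemma dist_add_scaleR_Basis_less:
  fixes x a b :: "'a::euclidean_space"
  assumes "a \<in> Basis" "b \<in> Basis" "\<bar>s\<bar> < d / 2" "\<bar>t\<bar> < d / 2"
  shows "dist (x + s *\<^sub>R a + t *\<^sub>R b) x < d"
proof -
  have "dist (x + s *\<^sub>R a + t *\<^sub>R b) x = norm (s *\<^sub>R a + t *\<^sub>R b)"
    by (simp add: dist_norm)
  also have "\<dots> \<le> norm (s *\<^sub>R a) + norm (t *\<^sub>R b)"
    by (rule norm_triangle_ineq)
  also have "\<dots> < d"
    using assms by simp
  finally show ?thesis .
qed

lemma Cinf_on_dd_commute:
  fixes f :: "'a::euclidean_space \<Rightarrow> real"
  assumes S: "open S" and f: "Cinf_on S f" and a: "a \<in> Basis" and b: "b \<in> Basis" and x: "x \<in> S"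
  shows "dd a (dd b f) x = dd b (dd a f) x"
proof -
  obtain r0 where r0: "r0 > 0" "ball x r0 \<subseteq> S"
    using S x open_contains_ball by blast
  define r where "r = r0 / 2"
  have r: "r > 0"
    using r0 by (simp add: r_def)
  have inS: "x + s *\<^sub>R a + t *\<^sub>R b \<in> S" if "\<bar>s\<bar> < r" "\<bar>t\<bar> < r" for s t
    using dist_add_scaleR_Basis_less[OF a b, of s r0 t x] that r0 by (auto simp: r_def dist_commute)
  have cont: "\<exists>d>0. \<forall>s t. \<bar>s\<bar> < d \<longrightarrow> \<bar>t\<bar> < d \<longrightarrow>
      \<bar>G (x + s *\<^sub>R a + t *\<^sub>R b) - G (x + 0 *\<^sub>R a + 0 *\<^sub>R b)\<bar> < e"
    if G: "continuous_on S G" and e: "e > 0" for G :: "'a \<Rightarrow> real" and e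
  proof -
    obtain d where d: "d > 0" "\<forall>y\<in>S. dist y x < d \<longrightarrow> dist (G y) (G x) < e"
      using G[unfolded continuous_on_iff] x e by blast
    have "\<bar>G (x + s *\<^sub>R a + t *\<^sub>R b) - G x\<bar> < e"
      if "\<bar>s\<bar> < min d r0 / 2" "\<bar>t\<bar> < min d r0 / 2" for s t
      using d(2) inS[of s t] dist_add_scaleR_Basis_less[OF a b, of s d t x] that
      by (auto simp: r_def dist_real_def)
    then show ?thesis
      using d(1) r0(1) by (intro exI[of _ "min d r0 / 2"]) auto
  qed
  have fa: "Cinf_on S (dd a f)" and fb: "Cinf_on S (dd b f)" using Cinf_on_dd f a b by auto
  have fab: "Cinf_on S (dd a (dd b f))" and fba: "Cinf_on S (dd b (dd a f))" using Cinf_on_dd fa fb a b by auto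
  define g where "g s t = f (x + s *\<^sub>R a + t *\<^sub>R b)" for s t
  define g1 where "g1 s t = dd a f (x + s *\<^sub>R a + t *\<^sub>R b)" for s t
  define g2 where "g2 s t = dd b f (x + s *\<^sub>R a + t *\<^sub>R b)" for s t
  define g12 where "g12 s t = dd b (dd a f) (x + s *\<^sub>R a + t *\<^sub>R b)" for s t
  define g21 where "g21 s t = dd a (dd b f) (x + s *\<^sub>R a + t *\<^sub>R b)" for s t
  have "g12 0 0 = g21 0 0"
  proof (rule mixed_partials_eq_core[OF r, of g g1 g12 g2 g21])
    fix s t :: real assume st: "\<bar>s\<bar> < r" "\<bar>t\<bar> < r"
    have A1: "(\<lambda>s. g s t) = (\<lambda>s. f ((x + t *\<^sub>R b) + s *\<^sub>R a))"
      and A2: "g1 s t = dd a f ((x + t *\<^sub>R b) + s *\<^sub>R a)"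
      and A3: "(\<lambda>t. g1 s t) = (\<lambda>t. dd a f ((x + s *\<^sub>R a) + t *\<^sub>R b))"
      and A4: "g12 s t = dd b (dd a f) ((x + s *\<^sub>R a) + t *\<^sub>R b)"
      and A5: "(\<lambda>t. g s t) = (\<lambda>t. f ((x + s *\<^sub>R a) + t *\<^sub>R b))"
      and A6: "g2 s t = dd b f ((x + s *\<^sub>R a) + t *\<^sub>R b)"
      and A7: "(\<lambda>s. g2 s t) = (\<lambda>s. dd b f ((x + t *\<^sub>R b) + s *\<^sub>R a))"
      and A8: "g21 s t = dd a (dd b f) ((x + t *\<^sub>R b) + s *\<^sub>R a)"
      by (simp_all add: g_def g1_def g2_def g12_def g21_def algebra_simps)
    have P1: "(x + t *\<^sub>R b) + s *\<^sub>R a \<in> S" and P2: "(x + s *\<^sub>R a) + t *\<^sub>R b \<in> S"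
      using inS[OF st] by (simp_all add: algebra_simps)
    show "((\<lambda>s. g s t) has_real_derivative g1 s t) (at s)"
      unfolding A1 A2 by (rule Cinf_on_DERIV_line[OF f a P1])
    show "((\<lambda>t. g1 s t) has_real_derivative g12 s t) (at t)"
      unfolding A3 A4 by (rule Cinf_on_DERIV_line[OF fa b P2])
    show "((\<lambda>t. g s t) has_real_derivative g2 s t) (at t)"
      unfolding A5 A6 by (rule Cinf_on_DERIV_line[OF f b P2])
    show "((\<lambda>s. g2 s t) has_real_derivative g21 s t) (at s)"
      unfolding A7 A8 by (rule Cinf_on_DERIV_line[OF fb a P1])
  next
    fix e :: real assume "e > 0"
    then show "\<exists>d>0. \<forall>s t. \<bar>s\<bar> < d \<longrightarrow> \<bar>t\<bar> < d \<longrightarrow> \<bar>g12 s t - g12 0 0\<bar> < e"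
      unfolding g12_def using cont[OF Cinf_on_imp_continuous_on[OF fba]] by blast
  next
    fix e :: real assume "e > 0"
    then show "\<exists>d>0. \<forall>s t. \<bar>s\<bar> < d \<longrightarrow> \<bar>t\<bar> < d \<longrightarrow> \<bar>g21 s t - g21 0 0\<bar> < e"
      unfolding g21_def using cont[OF Cinf_on_imp_continuous_on[OF fab]] by blast
  qed
  then show ?thesis by (simp add: g12_def g21_def)
qed

section \<open>Smooth functions are differentiable\<close>

lemma MVT_symmetric:
  fixes \<phi> \<phi>' :: "real \<Rightarrow> real"
  assumes "\<And>\<theta>. \<bar>\<theta>\<bar> \<le> \<bar>s\<bar> \<Longrightarrow> (\<phi> has_real_derivative \<phi>' \<theta>) (at \<theta>)"
  shows "\<exists>\<theta>. \<bar>\<theta>\<bar> \<le> \<bar>s\<bar> \<and> \<phi> s - \<phi> 0 = s * \<phi>' \<theta>"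
proof (cases "s = 0")
  case True then show ?thesis by auto
next
  case False
  show ?thesis
  proof (cases "s > 0")
    case True
    then obtain z where "0 < z" "z < s" "\<phi> s - \<phi> 0 = (s - 0) * \<phi>' z"
      using MVT2[of 0 s \<phi> \<phi>'] assms by auto
    then show ?thesis by (intro exI[of _ z]) auto
  next
    case F: False
    then have "s < 0" using False by simp
    then obtain z where "s < z" "z < 0" "\<phi> 0 - \<phi> s = (0 - s) * \<phi>' z"
      using MVT2[of s 0 \<phi> \<phi>'] assms by auto
    then show ?thesis by (intro exI[of _ z]) (auto simp: algebra_simps)
  qed
qed

lemma norm_sum_basis_le:
  fixes v :: "'a::euclidean_space"
  assumes "K \<subseteq> Basis"
  shows "norm (\<Sum>b\<in>K. (v \<bullet> b) *\<^sub>R b) \<le> real (card K) * norm v"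
proof -
  have fin: "finite K" using assms finite_Basis finite_subset by blast
  have "norm (\<Sum>b\<in>K. (v \<bullet> b) *\<^sub>R b) \<le> (\<Sum>b\<in>K. norm ((v \<bullet> b) *\<^sub>R b))" by (rule norm_sum)
  also have "\<dots> \<le> (\<Sum>b\<in>K. norm v)"
    using assms by (intro sum_mono) (auto simp: Basis_le_norm)
  also have "\<dots> = real (card K) * norm v" by simp
  finally show ?thesis .
qed

lemma Cinf_on_coordinate_increment:
  fixes f :: "'a::euclidean_space \<Rightarrow> real"
  assumes S: "open S" and f: "Cinf_on S f" and x: "x \<in> S" and c: "c \<in> Basis" and e: "e > 0"
  obtains d where "d > 0"
    "\<And>y s. dist y x < d \<Longrightarrow> \<bar>s\<bar> < d \<Longrightarrow> \<bar>f (y + s *\<^sub>R c) - f y - s * dd c f x\<bar> \<le> e * \<bar>s\<bar>"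
proof -
  obtain r where r: "r > 0" "ball x r \<subseteq> S"
    using S x open_contains_ball by blast
  obtain d2 where d2: "d2 > 0" "\<forall>y\<in>S. dist y x < d2 \<longrightarrow> dist (dd c f y) (dd c f x) < e"
    using Cinf_on_imp_continuous_on[OF Cinf_on_dd[OF f c], unfolded continuous_on_iff] x e by blast
  define d where "d = min d2 r / 2"
  have near: "y + \<theta> *\<^sub>R c \<in> S \<and> dist (y + \<theta> *\<^sub>R c) x < d2" if "dist y x < d" "\<bar>\<theta>\<bar> < d" for y \<theta>
  proof -
    have "dist (y + \<theta> *\<^sub>R c) x \<le> dist (y + \<theta> *\<^sub>R c) y + dist y x"
      by (rule dist_triangle)
    also have "\<dots> < min d2 r"
      using that c by (simp add: dist_norm d_def)
    finally show ?thesis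
      using r by (auto simp: dist_commute)
  qed
  show ?thesis
  proof (rule that)
    show "d > 0"
      using d2 r by (simp add: d_def)
    fix y s assume y: "dist y x < d" and s: "\<bar>s\<bar> < d"
    obtain \<theta> where \<theta>: "\<bar>\<theta>\<bar> \<le> \<bar>s\<bar>" "f (y + s *\<^sub>R c) - f (y + 0 *\<^sub>R c) = s * dd c f (y + \<theta> *\<^sub>R c)"
      using MVT_symmetric[of s "\<lambda>t. f (y + t *\<^sub>R c)" "\<lambda>t. dd c f (y + t *\<^sub>R c)"]
        Cinf_on_DERIV_line[OF f c] near[OF y] s by force
    have "\<bar>dd c f (y + \<theta> *\<^sub>R c) - dd c f x\<bar> \<le> e"
      using d2(2) near[OF y, of \<theta>] \<theta>(1) s by (force simp: dist_real_def)
    then have "\<bar>s\<bar> * \<bar>dd c f (y + \<theta> *\<^sub>R c) - dd c f x\<bar> \<le> \<bar>s\<bar> * e"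
      by (rule mult_left_mono) simp
    then show "\<bar>f (y + s *\<^sub>R c) - f y - s * dd c f x\<bar> \<le> e * \<bar>s\<bar>"
      using \<theta>(2) by (simp add: abs_mult[symmetric] algebra_simps)
  qed
qed

text \<open>Induction over the coordinate directions used so far: each new direction adds an error
  controlled by the mean value theorem.\<close>

lemma Cinf_on_partial_sum_approx:
  fixes f :: "'a::euclidean_space \<Rightarrow> real"
  assumes S: "open S" and f: "Cinf_on S f" and x: "x \<in> S"
  shows "K \<subseteq> Basis \<Longrightarrow> \<forall>e>0. \<exists>d>0. \<forall>v. norm v < d \<longrightarrow>
     \<bar>f (x + (\<Sum>b\<in>K. (v \<bullet> b) *\<^sub>R b)) - f x - (\<Sum>b\<in>K. (v \<bullet> b) * dd b f x)\<bar> \<le> e * norm v"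
proof (induction K rule: infinite_finite_induct)
  case (infinite K)
  then show ?case using finite_Basis finite_subset by blast
next
  case empty
  then show ?case by (auto intro: exI[of _ 1])
next
  case (insert c K)
  have c: "c \<in> Basis" and K: "K \<subseteq> Basis"
    using insert.prems by auto
  define n where "n = real (card K) + 1"
  show ?case
  proof (intro allI impI)
    fix e :: real assume e: "e > 0"
    obtain d1 where d1: "d1 > 0" "\<forall>v. norm v < d1 \<longrightarrow>
       \<bar>f (x + (\<Sum>b\<in>K. (v \<bullet> b) *\<^sub>R b)) - f x - (\<Sum>b\<in>K. (v \<bullet> b) * dd b f x)\<bar> \<le> (e/2) * norm v"
      using insert.IH[OF K] e by (meson half_gt_zero)
    obtain d2 where d2: "d2 > 0" "\<And>y s. dist y x < d2 \<Longrightarrow> \<bar>s\<bar> < d2 \<Longrightarrow>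
        \<bar>f (y + s *\<^sub>R c) - f y - s * dd c f x\<bar> \<le> (e/2) * \<bar>s\<bar>"
      using Cinf_on_coordinate_increment[OF S f x c, of "e/2"] e by auto
    have "\<bar>f (x + (\<Sum>b\<in>insert c K. (v \<bullet> b) *\<^sub>R b)) - f x - (\<Sum>b\<in>insert c K. (v \<bullet> b) * dd b f x)\<bar>
        \<le> e * norm v" if v: "norm v < min d1 (d2 / n)" for v
    proof -
      define y where "y = x + (\<Sum>b\<in>K. (v \<bullet> b) *\<^sub>R b)"
      define s where "s = v \<bullet> c"
      have s: "\<bar>s\<bar> \<le> norm v"
        using Basis_le_norm[OF c] s_def by simp
      have "norm v + norm v * real (card K) < d2"
        using v by (simp add: n_def field_simps)
      moreover have "dist y x \<le> norm v * real (card K)"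
        using norm_sum_basis_le[OF K, of v] by (simp add: y_def dist_norm mult.commute)
      moreover have "0 \<le> norm v * real (card K)"
        by simp
      ultimately have "dist y x < d2" "\<bar>s\<bar> < d2"
        using s by linarith+
      moreover have "(e/2) * \<bar>s\<bar> \<le> (e/2) * norm v"
        using s e by (intro mult_left_mono) auto
      ultimately have A: "\<bar>f (y + s *\<^sub>R c) - f y - s * dd c f x\<bar> \<le> (e/2) * norm v"
        using d2(2) by fastforce
      have B: "\<bar>f y - f x - (\<Sum>b\<in>K. (v \<bullet> b) * dd b f x)\<bar> \<le> (e/2) * norm v"
        using d1(2) v unfolding y_def by auto
      have "x + (\<Sum>b\<in>insert c K. (v \<bullet> b) *\<^sub>R b) = y + s *\<^sub>R c"
        and "(\<Sum>b\<in>insert c K. (v \<bullet> b) * dd b f x) = s * dd c f x + (\<Sum>b\<in>K. (v \<bullet> b) * dd b f x)"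
        using insert(1,2) by (simp_all add: y_def s_def algebra_simps)
      with A B show ?thesis
        by (simp only:)
    qed
    then show "\<exists>d>0. \<forall>v. norm v < d \<longrightarrow>
       \<bar>f (x + (\<Sum>b\<in>insert c K. (v \<bullet> b) *\<^sub>R b)) - f x - (\<Sum>b\<in>insert c K. (v \<bullet> b) * dd b f x)\<bar> \<le> e * norm v"
      using d1(1) d2(1) by (intro exI[of _ "min d1 (d2 / n)"]) (auto simp: n_def)
  qed
qed

lemma Cinf_on_has_derivative:
  fixes f :: "'a::euclidean_space \<Rightarrow> real"
  assumes S: "open S" and f: "Cinf_on S f" and x: "x \<in> S"
  shows "(f has_derivative (\<lambda>v. \<Sum>b\<in>Basis. (v \<bullet> b) * dd b f x)) (at x)"
  unfolding has_derivative_at_alt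
proof (intro conjI allI impI)
  show "bounded_linear (\<lambda>v. \<Sum>b\<in>Basis. (v \<bullet> b) * dd b f x)"
    by (intro bounded_linear_intros)
  fix e :: real assume e: "e > 0"
  obtain d where d: "d > 0" "\<forall>v. norm v < d \<longrightarrow>
     \<bar>f (x + (\<Sum>b\<in>Basis. (v \<bullet> b) *\<^sub>R b)) - f x - (\<Sum>b\<in>Basis. (v \<bullet> b) * dd b f x)\<bar> \<le> e * norm v"
    using Cinf_on_partial_sum_approx[OF S f x order_refl] e by blast
  show "\<exists>d>0. \<forall>y. norm (y - x) < d \<longrightarrow>
      norm (f y - f x - (\<Sum>b\<in>Basis. ((y - x) \<bullet> b) * dd b f x)) \<le> e * norm (y - x)"
  proof (intro exI[of _ d] conjI allI impI d(1))
    fix y assume "norm (y - x) < d"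
    then have "\<bar>f (x + (y - x)) - f x - (\<Sum>b\<in>Basis. ((y - x) \<bullet> b) * dd b f x)\<bar> \<le> e * norm (y - x)"
      using d(2) euclidean_representation[of "y - x"] by metis
    then show "norm (f y - f x - (\<Sum>b\<in>Basis. ((y - x) \<bullet> b) * dd b f x)) \<le> e * norm (y - x)"
      by simp
  qed
qed

lemma Cinf_on_differentiable:
  fixes f :: "'a::euclidean_space \<Rightarrow> real"
  shows "open S \<Longrightarrow> Cinf_on S f \<Longrightarrow> x \<in> S \<Longrightarrow> f differentiable (at x)"
  using Cinf_on_has_derivative differentiable_def by blast

lemma Basis_vec_cases:
  assumes "(i::real^4) \<in> Basis" obtains j where "i = axis j 1"
  using assms by (auto simp: Basis_vec_def)

lemma has_dd_chain:
  fixes G :: "real^4 \<Rightarrow> real" and F :: "'a::real_normed_vector \<Rightarrow> real^4"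
  assumes G: "(G has_derivative G') (at (F q))"
    and Fd: "\<And>k. has_dd (\<lambda>q. F q $ k) b q (Fv $ k)"
  shows "has_dd (\<lambda>q. G (F q)) b q (G' Fv)"
proof -
  have "((\<lambda>t. F (q + t *\<^sub>R b)) has_derivative (\<lambda>t. t *\<^sub>R Fv)) (at 0)"
  proof (subst has_derivative_componentwise_within, intro ballI)
    fix i :: "real^4" assume "i \<in> Basis"
    then obtain j where j: "i = axis j 1" by (rule Basis_vec_cases)
    have "((\<lambda>t. F (q + t *\<^sub>R b) $ j) has_derivative (\<lambda>t. t * Fv $ j)) (at 0)"
      using Fd[of j] unfolding has_dd_def has_field_derivative_def
      by (metis (no_types, lifting) ext mult.commute)
    then show "((\<lambda>t. F (q + t *\<^sub>R b) \<bullet> i) has_derivative (\<lambda>t. (t *\<^sub>R Fv) \<bullet> i)) (at 0)"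
      by (simp add: j inner_axis)
  qed
  moreover have "(G has_derivative G') (at (F (q + 0 *\<^sub>R b)))" using G by simp
  ultimately have "((\<lambda>t. G (F (q + t *\<^sub>R b))) has_derivative (\<lambda>t. G' (t *\<^sub>R Fv))) (at 0)"
    using has_derivative_compose[of "\<lambda>t. F (q + t *\<^sub>R b)" "\<lambda>t. t *\<^sub>R Fv" 0 UNIV G G'] by (simp add: o_def)
  moreover have "(\<lambda>t. G' (t *\<^sub>R Fv)) = (\<lambda>t. G' Fv * t)"
    using has_derivative_linear[OF G] by (simp add: linear_cmul fun_eq_iff mult.commute)
  ultimately show ?thesis unfolding has_dd_def has_field_derivative_def by simp
qed

lemma has_derivative_eq_sum_d4:
  fixes G :: "real^4 \<Rightarrow> real"
  assumes G: "(G has_derivative G') (at x)"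
  shows "G' v = (\<Sum>i\<in>UNIV. v $ i * d4 i G x)"
proof -
  have lin: "linear G'" using has_derivative_linear[OF G] .
  have d: "d4 i G x = G' (axis i 1)" for i
  proof -
    have c: "has_dd (\<lambda>q. q $ k) a x (a $ k)" for k and a :: "real^4"
      unfolding has_dd_def by (auto intro!: derivative_eq_intros)
    have "has_dd (\<lambda>y. G y) (axis i 1) x (G' (axis i 1))"
      using has_dd_chain[of G G' "\<lambda>y. y" x "axis i 1" "axis i 1", OF G c] by simp
    then show ?thesis unfolding d4_def by (simp add: has_dd_imp_dd)
  qed
  have "G' v = G' (\<Sum>i\<in>UNIV. v $ i *\<^sub>R axis i 1)"
    using basis_expansion[of v] by (simp add: scalar_mult_eq_scaleR)
  also have "\<dots> = (\<Sum>i\<in>UNIV. v $ i * G' (axis i 1))"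
    by (simp add: linear_sum[OF lin] linear_cmul[OF lin])
  finally show ?thesis by (simp add: d)
qed

lemma differentiable_prod:
  fixes f :: "'i \<Rightarrow> 'a::real_normed_vector \<Rightarrow> real"
  shows "finite I \<Longrightarrow> (\<And>i. i \<in> I \<Longrightarrow> f i differentiable (at x)) \<Longrightarrow> (\<lambda>y. \<Prod>i\<in>I. f i y) differentiable (at x)"
proof (induction I rule: finite_induct)
  case empty then show ?case by simp
next
  case (insert a I)
  then show ?case by (simp add: differentiable_mult)
qed

lemma det_differentiable:
  fixes M :: "'a::real_normed_vector \<Rightarrow> real^'n^'n"
  assumes A: "\<And>i j. (\<lambda>y. M y $ i $ j) differentiable (at x)"
  shows "(\<lambda>y. det (M y)) differentiable (at x)"
proof -
  have "(\<lambda>y. \<Sum>p\<in>{p. p permutes (UNIV::'n set)}. of_int (sign p) * (\<Prod>i\<in>UNIV. M y $ i $ p i)) differentiable (at x)"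
  proof (rule differentiable_sum)
    show "finite {p. p permutes (UNIV::'n set)}" by (simp add: finite_permutations)
    show "\<forall>p\<in>{p. p permutes (UNIV::'n set)}. (\<lambda>y. of_int (sign p) * (\<Prod>i\<in>UNIV. M y $ i $ p i)) differentiable (at x)"
    proof
      fix p
      have "(\<lambda>y. \<Prod>i\<in>UNIV. M y $ i $ p i) differentiable (at x)"
        by (rule differentiable_prod) (simp_all add: A)
      then show "(\<lambda>y. of_int (sign p) * (\<Prod>i\<in>UNIV. M y $ i $ p i)) differentiable (at x)"
        by (intro differentiable_mult differentiable_const)
    qed
  qed
  then show ?thesis unfolding det_def .
qed

lemma sum_if_eq_mult: "(\<Sum>m\<in>UNIV. (if j = m then 1 else 0) * (f m :: real)) = f (j::'n::finite)"
proof -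
  have "\<And>m. (if j = m then 1 else 0) * f m = (if j = m then f m else 0)" by simp
  then show ?thesis by (simp only: sum.delta) simp
qed

locale riemannian_chart =
  fixes V :: "(real^4) set" and h :: metric4
  assumes V_open: "open V" and met: "riemannian_metric_on V h"
begin

definition metric_matrix :: "real^4 \<Rightarrow> real^4^4" where "metric_matrix x = (\<chi> i j. h x i j)"

lemma metric_Cinf: "Cinf_on V (\<lambda>x. h x i j)"
  using met unfolding riemannian_metric_on_def by blast

lemma metric_sym: "x \<in> V \<Longrightarrow> h x i j = h x j i"
  using met unfolding riemannian_metric_on_def by blast

lemma metric_pos: "x \<in> V \<Longrightarrow> X \<noteq> 0 \<Longrightarrow> hin h x X X > 0"
  using met unfolding riemannian_metric_on_def by blast

lemma hin_self_eq_inner: "hin h x X X = X \<bullet> (metric_matrix x *v X)"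
  unfolding hin_def metric_matrix_def
  by (simp add: inner_vec_def matrix_vector_mult_def sum_distrib_left algebra_simps)

lemma metric_matrix_invertible: "x \<in> V \<Longrightarrow> invertible (metric_matrix x)"
proof -
  assume x: "x \<in> V"
  have "\<forall>X. metric_matrix x *v X = 0 \<longrightarrow> X = 0"
  proof (intro allI impI)
    fix X assume "metric_matrix x *v X = 0"
    then have "hin h x X X = 0" by (simp add: hin_self_eq_inner)
    then show "X = 0" using metric_pos[OF x] by (metis less_irrefl)
  qed
  then show ?thesis
    unfolding invertible_left_inverse matrix_left_invertible_ker .
qed

lemma metric_matrix_inverse: "x \<in> V \<Longrightarrow> metric_matrix x ** matrix_inv (metric_matrix x) = mat 1 \<and> matrix_inv (metric_matrix x) ** metric_matrix x = mat 1"
proof -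
  assume x: "x \<in> V"
  have "\<exists>A'. metric_matrix x ** A' = mat 1 \<and> A' ** metric_matrix x = mat 1"
    using metric_matrix_invertible[OF x] unfolding invertible_def .
  then show ?thesis unfolding matrix_inv_def by (rule someI_ex)
qed

lemma metric_hinv_right: "x \<in> V \<Longrightarrow> (\<Sum>l\<in>UNIV. h x i l * hinv h x l m) = (if i = m then 1 else 0)"
proof -
  assume x: "x \<in> V"
  have "(\<Sum>l\<in>UNIV. h x i l * hinv h x l m) = (metric_matrix x ** matrix_inv (metric_matrix x)) $ i $ m"
    by (simp add: matrix_matrix_mult_def metric_matrix_def hinv_def)
  also have "\<dots> = mat 1 $ i $ m" using metric_matrix_inverse[OF x] by simp
  also have "\<dots> = (if i = m then 1 else 0)" by (simp add: mat_def)
  finally show ?thesis .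
qed

lemma det_metric_matrix_nz: "x \<in> V \<Longrightarrow> det (metric_matrix x) \<noteq> 0"
  using metric_matrix_invertible invertible_det_nz by blast

lemma hinv_cramer:
  assumes x: "x \<in> V"
  shows "hinv h x k l = det (\<chi> i j. if j = k then (axis l 1 :: real^4) $ i else h x i j) / det (metric_matrix x)"
proof -
  let ?A = "metric_matrix x" and ?B = "matrix_inv (metric_matrix x)"
  have 1: "?A *v (?B *v axis l 1) = axis l 1"
    using metric_matrix_inverse[OF x] by (simp add: matrix_vector_mul_assoc)
  have 2: "?B *v axis l 1 = (\<chi> k. det(\<chi> i j. if j=k then (axis l 1 :: real^4)$i else ?A$i$j) / det ?A)"
    using iffD1[OF cramer[OF det_metric_matrix_nz[OF x]] 1] .
  have "hinv h x k l = ?B $ k $ l" by (simp add: hinv_def metric_matrix_def)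
  also have "\<dots> = (?B *v axis l 1) $ k"
    by (metis cart_eq_inner_axis matrix_vector_mul_component)
  also have "\<dots> = det(\<chi> i j. if j=k then (axis l 1 :: real^4)$i else ?A$i$j) / det ?A"
    unfolding 2 by simp
  also have "(\<chi> i j. if j = k then (axis l 1::real^4)$i else ?A$i$j) =
      (\<chi> i j. if j = k then (axis l 1::real^4)$i else h x i j)" unfolding metric_matrix_def by (simp cong: if_cong)
  finally show ?thesis .
qed

lemma metric_differentiable: "x \<in> V \<Longrightarrow> (\<lambda>y. h y i j) differentiable (at x)"
  using Cinf_on_differentiable[OF V_open metric_Cinf] .

lemma d4_metric_Cinf: "Cinf_on V (\<lambda>y. d4 k (\<lambda>y. h y i j) y)"
  unfolding d4_def using Cinf_on_dd[OF metric_Cinf, of "axis k 1"] by simp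

lemma d4_metric_differentiable: "x \<in> V \<Longrightarrow> (\<lambda>y. d4 k (\<lambda>y. h y i j) y) differentiable (at x)"
  using Cinf_on_differentiable[OF V_open d4_metric_Cinf] .

lemma hinv_differentiable:
  assumes x: "x \<in> V" shows "(\<lambda>y. hinv h y k l) differentiable (at x)"
proof -
  have "(\<lambda>y. det (\<chi> i j. if j = k then (axis l 1 :: real^4) $ i else h y i j) / det (metric_matrix y)) differentiable (at x)"
    using det_metric_matrix_nz[OF x]
  proof (intro differentiable_divide det_differentiable)
    fix i j
    show "(\<lambda>y. (\<chi> i j. if j = k then (axis l 1 :: real^4) $ i else h y i j) $ i $ j) differentiable (at x)"
      by (cases "j = k") (simp_all add: metric_differentiable[OF x])
    show "(\<lambda>y. metric_matrix y $ i $ j) differentiable (at x)"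
      by (simp add: metric_matrix_def metric_differentiable[OF x])
  qed
  then obtain D where "((\<lambda>y. det (\<chi> i j. if j = k then (axis l 1 :: real^4) $ i else h y i j) / det (metric_matrix y)) has_derivative D) (at x)"
    unfolding differentiable_def by blast
  then have "((\<lambda>y. hinv h y k l) has_derivative D) (at x)"
    by (rule has_derivative_transform_within_open[OF _ V_open x]) (simp add: hinv_cramer)
  then show ?thesis unfolding differentiable_def by blast
qed

lemma Gam_differentiable:
  assumes x: "x \<in> V" shows "(\<lambda>y. Gam h y k i j) differentiable (at x)"
proof -
  have "(\<lambda>y. \<Sum>l\<in>UNIV. hinv h y k l * (d4 i (\<lambda>y. h y j l) y + d4 j (\<lambda>y. h y i l) y - d4 l (\<lambda>y. h y i j) y)) differentiable (at x)"
  proof (rule differentiable_sum)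
    show "finite (UNIV :: 4 set)" by simp
    show "\<forall>l\<in>UNIV. (\<lambda>y. hinv h y k l * (d4 i (\<lambda>y. h y j l) y + d4 j (\<lambda>y. h y i l) y - d4 l (\<lambda>y. h y i j) y)) differentiable (at x)"
    proof
      fix l :: 4
      show "(\<lambda>y. hinv h y k l * (d4 i (\<lambda>y. h y j l) y + d4 j (\<lambda>y. h y i l) y - d4 l (\<lambda>y. h y i j) y)) differentiable (at x)"
        by (rule differentiable_mult[OF hinv_differentiable[OF x] differentiable_diff[OF differentiable_add]])
           (rule d4_metric_differentiable[OF x])+
    qed
  qed
  then have "(\<lambda>y. 1/2 * (\<Sum>l\<in>UNIV. hinv h y k l * (d4 i (\<lambda>y. h y j l) y + d4 j (\<lambda>y. h y i l) y - d4 l (\<lambda>y. h y i j) y))) differentiable (at x)"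
    by (rule differentiable_mult[OF differentiable_const])
  then show ?thesis unfolding Gam_def .
qed

lemma Gam_has_derivative:
  "x \<in> V \<Longrightarrow> ((\<lambda>y. Gam h y k i j) has_derivative (\<lambda>v. \<Sum>m\<in>UNIV. v $ m * d4 m (\<lambda>y. Gam h y k i j) x)) (at x)"
proof -
  assume x: "x \<in> V"
  obtain G' where G: "((\<lambda>y. Gam h y k i j) has_derivative G') (at x)"
    using Gam_differentiable[OF x] unfolding differentiable_def by blast
  moreover have "G' = (\<lambda>v. \<Sum>m\<in>UNIV. v $ m * d4 m (\<lambda>y. Gam h y k i j) x)"
    using has_derivative_eq_sum_d4[OF G] by (simp add: fun_eq_iff)
  ultimately show ?thesis by simp
qed

lemma metric_has_derivative:
  "x \<in> V \<Longrightarrow> ((\<lambda>y. h y i j) has_derivative (\<lambda>v. \<Sum>m\<in>UNIV. v $ m * d4 m (\<lambda>y. h y i j) x)) (at x)"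
proof -
  assume x: "x \<in> V"
  obtain G' where G: "((\<lambda>y. h y i j) has_derivative G') (at x)"
    using metric_differentiable[OF x] unfolding differentiable_def by blast
  moreover have "G' = (\<lambda>v. \<Sum>m\<in>UNIV. v $ m * d4 m (\<lambda>y. h y i j) x)"
    using has_derivative_eq_sum_d4[OF G] by (simp add: fun_eq_iff)
  ultimately show ?thesis by simp
qed

lemma d4_metric_sym: "x \<in> V \<Longrightarrow> d4 k (\<lambda>y. h y i j) x = d4 k (\<lambda>y. h y j i) x"
  unfolding d4_def by (rule dd_cong[OF V_open]) (auto simp: metric_sym)

lemma Gam_sym: "x \<in> V \<Longrightarrow> Gam h x k i j = Gam h x k j i"
  unfolding Gam_def using d4_metric_sym by (simp add: algebra_simps)

lemma metric_times_Gam: "x \<in> V \<Longrightarrow>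
  (\<Sum>l\<in>UNIV. h x l j * Gam h x l k i) =
    (d4 k (\<lambda>y. h y i j) x + d4 i (\<lambda>y. h y k j) x - d4 j (\<lambda>y. h y k i) x) / 2"
proof -
  assume x: "x \<in> V"
  define S where "S m = d4 k (\<lambda>y. h y i m) x + d4 i (\<lambda>y. h y k m) x - d4 m (\<lambda>y. h y k i) x" for m
  have G: "Gam h x l k i = (1/2) * (\<Sum>m\<in>UNIV. hinv h x l m * S m)" for l
    unfolding Gam_def S_def by simp
  have "(\<Sum>l\<in>UNIV. h x l j * Gam h x l k i) =
     (1/2) * (\<Sum>l\<in>UNIV. \<Sum>m\<in>UNIV. h x l j * hinv h x l m * S m)"
    unfolding G by (simp add: sum_distrib_left mult.assoc mult.left_commute)
  also have "\<dots> = (1/2) * (\<Sum>m\<in>UNIV. (\<Sum>l\<in>UNIV. h x j l * hinv h x l m) * S m)"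
    using metric_sym[OF x] by (subst sum.swap) (simp add: sum_distrib_right)
  also have "\<dots> = (1/2) * S j"
    by (simp add: metric_hinv_right[OF x] sum_if_eq_mult)
  finally show ?thesis by (simp add: S_def)
qed

lemma d4_metric_eq_Gam: "x \<in> V \<Longrightarrow>
  d4 k (\<lambda>y. h y i j) x = (\<Sum>l\<in>UNIV. h x l j * Gam h x l k i + h x i l * Gam h x l k j)"
proof -
  assume x: "x \<in> V"
  have "(\<Sum>l\<in>UNIV. h x i l * Gam h x l k j) = (\<Sum>l\<in>UNIV. h x l i * Gam h x l k j)"
    using metric_sym[OF x] by simp
  then have "(\<Sum>l\<in>UNIV. h x l j * Gam h x l k i + h x i l * Gam h x l k j) =
      (d4 k (\<lambda>y. h y i j) x + d4 i (\<lambda>y. h y k j) x - d4 j (\<lambda>y. h y k i) x) / 2 +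
      (d4 k (\<lambda>y. h y j i) x + d4 j (\<lambda>y. h y k i) x - d4 i (\<lambda>y. h y k j) x) / 2"
    by (simp add: sum.distrib metric_times_Gam[OF x])
  also have "\<dots> = d4 k (\<lambda>y. h y i j) x" using d4_metric_sym[OF x, of k j i] by (simp add: field_simps)
  finally show ?thesis by simp
qed

end

definition has_dvec :: "(real \<times> real \<Rightarrow> real^4) \<Rightarrow> real \<times> real \<Rightarrow> real \<times> real \<Rightarrow> real^4 \<Rightarrow> bool" where
  "has_dvec A b q A' \<longleftrightarrow> (\<forall>k. has_dd (\<lambda>p. A p $ k) b q (A' $ k))"

lemma has_dvec_imp_dvec: "has_dvec A b q A' \<Longrightarrow> dvec b A q = A'"
  unfolding has_dvec_def dvec_def by (simp add: vec_eq_iff has_dd_imp_dd)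

lemma has_dvec_const: "has_dvec (\<lambda>p. c) b q 0"
  unfolding has_dvec_def by (simp add: has_dd_const)

lemma has_dvec_add: "has_dvec A b q A' \<Longrightarrow> has_dvec B b q B' \<Longrightarrow> has_dvec (\<lambda>p. A p + B p) b q (A' + B')"
  unfolding has_dvec_def by (simp add: has_dd_add)

definition affine_plane :: "'a::real_normed_vector \<Rightarrow> 'a \<Rightarrow> 'a \<Rightarrow> real \<times> real \<Rightarrow> 'a" where
  "affine_plane x X Y p = x + fst p *\<^sub>R X + snd p *\<^sub>R Y"

lemma continuous_on_affine_plane: "continuous_on UNIV (affine_plane x X Y)"
  unfolding affine_plane_def by (intro continuous_intros)

lemma has_dvec_affine_plane: "has_dvec (affine_plane x X Y) b p (fst b *\<^sub>R X + snd b *\<^sub>R Y)"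
  unfolding has_dvec_def has_dd_def affine_plane_def
  by (auto simp: algebra_simps intro!: derivative_eq_intros)

lemma dd_affine_plane:
  "dd b (\<lambda>p. G (affine_plane x X Y p)) p = dd (fst b *\<^sub>R X + snd b *\<^sub>R Y) G (affine_plane x X Y p)"
proof -
  have "(\<lambda>t. G (affine_plane x X Y (p + t *\<^sub>R b))) = (\<lambda>t. G (affine_plane x X Y p + t *\<^sub>R (fst b *\<^sub>R X + snd b *\<^sub>R Y)))"
    by (simp add: affine_plane_def algebra_simps)
  then show ?thesis
    unfolding dd_def by simp
qed

definition Chr :: "metric4 \<Rightarrow> real^4 \<Rightarrow> real^4 \<Rightarrow> real^4 \<Rightarrow> real^4" where
  "Chr h x X Y = (\<chi> k. \<Sum>a\<in>UNIV. \<Sum>c\<in>UNIV. Gam h x k a c * X$a * Y$c)"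

definition Gam_deriv :: "metric4 \<Rightarrow> real^4 \<Rightarrow> real^4 \<Rightarrow> 4 \<Rightarrow> 4 \<Rightarrow> 4 \<Rightarrow> real" where
  "Gam_deriv h x Z k a c = (\<Sum>i\<in>UNIV. d4 i (\<lambda>y. Gam h y k a c) x * Z$i)"

definition Chr_deriv :: "metric4 \<Rightarrow> real^4 \<Rightarrow> real^4 \<Rightarrow> real^4 \<Rightarrow> real^4 \<Rightarrow> real^4" where
  "Chr_deriv h x Z X Y = (\<chi> k. \<Sum>a\<in>UNIV. \<Sum>c\<in>UNIV. Gam_deriv h x Z k a c * X$a * Y$c)"

definition metric_deriv :: "metric4 \<Rightarrow> real^4 \<Rightarrow> real^4 \<Rightarrow> real^4 \<Rightarrow> real^4 \<Rightarrow> real" where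
  "metric_deriv h x Z X Y = (\<Sum>i\<in>UNIV. \<Sum>j\<in>UNIV. (\<Sum>k\<in>UNIV. d4 k (\<lambda>y. h y i j) x * Z$k) * X$i * Y$j)"

lemma Chr_add_right: "Chr h x X (Y + Y') = Chr h x X Y + Chr h x X Y'"
  unfolding Chr_def by (simp add: vec_eq_iff sum.distrib algebra_simps)
lemma Chr_add_left: "Chr h x (X + X') Y = Chr h x X Y + Chr h x X' Y"
  unfolding Chr_def by (simp add: vec_eq_iff sum.distrib algebra_simps)
lemma Chr_diff_right: "Chr h x X (Y - Y') = Chr h x X Y - Chr h x X Y'"
  unfolding Chr_def by (simp add: vec_eq_iff sum_subtractf algebra_simps)
lemma Chr_diff_left: "Chr h x (X - X') Y = Chr h x X Y - Chr h x X' Y"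
  unfolding Chr_def by (simp add: vec_eq_iff sum_subtractf algebra_simps)
lemma Chr_scale_right: "Chr h x X (c *\<^sub>R Y) = c *\<^sub>R Chr h x X Y"
  unfolding Chr_def by (simp add: vec_eq_iff sum_distrib_left algebra_simps)
lemma Chr_scale_left: "Chr h x (c *\<^sub>R X) Y = c *\<^sub>R Chr h x X Y"
  unfolding Chr_def by (simp add: vec_eq_iff sum_distrib_left algebra_simps)
lemma Chr_zero_right: "Chr h x X 0 = 0" and Chr_zero_left: "Chr h x 0 Y = 0"
  unfolding Chr_def by (simp_all add: vec_eq_iff)

lemma hin_add_left: "hin h x (X + X') Y = hin h x X Y + hin h x X' Y"
  unfolding hin_def by (simp add: sum.distrib algebra_simps)
lemma hin_add_right: "hin h x X (Y + Y') = hin h x X Y + hin h x X Y'"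
  unfolding hin_def by (simp add: sum.distrib algebra_simps)
lemma hin_diff_left: "hin h x (X - X') Y = hin h x X Y - hin h x X' Y"
  unfolding hin_def by (simp add: sum_subtractf algebra_simps)
lemma hin_diff_right: "hin h x X (Y - Y') = hin h x X Y - hin h x X Y'"
  unfolding hin_def by (simp add: sum_subtractf algebra_simps)
lemma hin_scale_left: "hin h x (c *\<^sub>R X) Y = c * hin h x X Y"
  unfolding hin_def by (simp add: sum_distrib_left algebra_simps)
lemma hin_scale_right: "hin h x X (c *\<^sub>R Y) = c * hin h x X Y"
  unfolding hin_def by (simp add: sum_distrib_left algebra_simps)
lemma hin_zero_left: "hin h x 0 Y = 0" and hin_zero_right: "hin h x X 0 = 0"
  unfolding hin_def by simp_all
lemma hin_minus_left: "hin h x (- X) Y = - hin h x X Y"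
  unfolding hin_def by (simp add: sum_negf)
lemma hin_minus_right: "hin h x X (- Y) = - hin h x X Y"
  unfolding hin_def by (simp add: sum_negf)

lemmas hin_lin = hin_add_left hin_add_right hin_diff_left hin_diff_right hin_scale_left hin_scale_right
  hin_zero_left hin_zero_right hin_minus_left hin_minus_right
lemmas Chr_lin = Chr_add_left Chr_add_right Chr_diff_left Chr_diff_right Chr_scale_left Chr_scale_right
  Chr_zero_left Chr_zero_right

context riemannian_chart
begin

lemma hin_sym: "x \<in> V \<Longrightarrow> hin h x X Y = hin h x Y X"
  unfolding hin_def using metric_sym by (subst sum.swap) (simp add: algebra_simps)

lemma metric_deriv_eq_Chr: "x \<in> V \<Longrightarrow> metric_deriv h x Z X Y = hin h x (Chr h x Z X) Y + hin h x X (Chr h x Z Y)"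
  unfolding metric_deriv_def d4_metric_eq_Gam hin_def Chr_def sum_4 vec_lambda_beta by algebra

lemma Rvec_eq_Chr: "Rvec h x X Y Z = Chr_deriv h x X Y Z - Chr_deriv h x Y X Z + Chr h x X (Chr h x Y Z) - Chr h x Y (Chr h x X Z)"
  unfolding vec_eq_iff
proof
  fix l
  show "Rvec h x X Y Z $ l = (Chr_deriv h x X Y Z - Chr_deriv h x Y X Z + Chr h x X (Chr h x Y Z) - Chr h x Y (Chr h x X Z)) $ l"
    unfolding Rvec_def Rc_def Chr_deriv_def Gam_deriv_def Chr_def sum_4 vec_lambda_beta vector_minus_component vector_add_component
    by algebra
qed

lemma Chr_sym:
  assumes x: "x \<in> V" shows "Chr h x X Y = Chr h x Y X"
proof -
  have "(\<Sum>a\<in>UNIV. \<Sum>c\<in>UNIV. Gam h x k a c * X$a * Y$c) = (\<Sum>a\<in>UNIV. \<Sum>c\<in>UNIV. Gam h x k a c * Y$a * X$c)" for k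
  proof -
    have "(\<Sum>a\<in>UNIV. \<Sum>c\<in>UNIV. Gam h x k a c * Y$a * X$c) = (\<Sum>c\<in>UNIV. \<Sum>a\<in>UNIV. Gam h x k a c * Y$a * X$c)"
      by (rule sum.swap)
    also have "\<dots> = (\<Sum>a\<in>UNIV. \<Sum>c\<in>UNIV. Gam h x k a c * X$a * Y$c)"
      using Gam_sym[OF x] by (simp add: mult_ac)
    finally show ?thesis by simp
  qed
  then show ?thesis unfolding Chr_def by (simp add: vec_eq_iff)
qed

lemma Gam_deriv_sym: "x \<in> V \<Longrightarrow> Gam_deriv h x Z k a c = Gam_deriv h x Z k c a"
proof -
  assume x: "x \<in> V"
  have "d4 i (\<lambda>y. Gam h y k a c) x = d4 i (\<lambda>y. Gam h y k c a) x" for i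
    unfolding d4_def by (rule dd_cong[OF V_open x]) (simp add: Gam_sym)
  then show ?thesis unfolding Gam_deriv_def by simp
qed

lemma Chr_deriv_sym:
  assumes x: "x \<in> V" shows "Chr_deriv h x Z X Y = Chr_deriv h x Z Y X"
proof -
  have "(\<Sum>a\<in>UNIV. \<Sum>c\<in>UNIV. Gam_deriv h x Z k a c * X$a * Y$c) = (\<Sum>a\<in>UNIV. \<Sum>c\<in>UNIV. Gam_deriv h x Z k a c * Y$a * X$c)" for k
  proof -
    have "(\<Sum>a\<in>UNIV. \<Sum>c\<in>UNIV. Gam_deriv h x Z k a c * Y$a * X$c) = (\<Sum>c\<in>UNIV. \<Sum>a\<in>UNIV. Gam_deriv h x Z k a c * Y$a * X$c)"
      by (rule sum.swap)
    also have "\<dots> = (\<Sum>a\<in>UNIV. \<Sum>c\<in>UNIV. Gam_deriv h x Z k a c * X$a * Y$c)"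
      using Gam_deriv_sym[OF x] by (simp add: mult_ac)
    finally show ?thesis by simp
  qed
  then show ?thesis unfolding Chr_deriv_def by (simp add: vec_eq_iff)
qed

lemma Dcov_eq_Chr: "Dcov h F b W p = dvec b W p + Chr h (F p) (dvec b F p) (W p)"
  unfolding Dcov_def Chr_def ..

lemma has_dd_metric_compose:
  assumes Fq: "F q \<in> V" and F: "has_dvec F b q Fb"
  shows "has_dd (\<lambda>p. h (F p) i j) b q (\<Sum>m\<in>UNIV. Fb$m * d4 m (\<lambda>y. h y i j) (F q))"
proof -
  have "has_dd (\<lambda>p. (\<lambda>y. h y i j) (F p)) b q ((\<lambda>v. \<Sum>m\<in>UNIV. v $ m * d4 m (\<lambda>y. h y i j) (F q)) Fb)"
    by (rule has_dd_chain[where F=F and q=q, OF metric_has_derivative[OF Fq]]) (use F in \<open>simp add: has_dvec_def\<close>)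
  then show ?thesis by simp
qed

lemma has_dd_Gam_compose:
  assumes Fq: "F q \<in> V" and F: "has_dvec F b q Fb"
  shows "has_dd (\<lambda>p. Gam h (F p) k a c) b q (Gam_deriv h (F q) Fb k a c)"
proof -
  have "has_dd (\<lambda>p. (\<lambda>y. Gam h y k a c) (F p)) b q ((\<lambda>v. \<Sum>m\<in>UNIV. v $ m * d4 m (\<lambda>y. Gam h y k a c) (F q)) Fb)"
    by (rule has_dd_chain[where F=F and q=q, OF Gam_has_derivative[OF Fq]]) (use F in \<open>simp add: has_dvec_def\<close>)
  then show ?thesis by (simp add: Gam_deriv_def mult.commute)
qed

lemma has_dd_hin:
  assumes Fq: "F q \<in> V" and F: "has_dvec F b q Fb" and A: "has_dvec A b q A'" and B: "has_dvec B b q B'"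
  shows "has_dd (\<lambda>p. hin h (F p) (A p) (B p)) b q
     (hin h (F q) (A' + Chr h (F q) Fb (A q)) (B q) + hin h (F q) (A q) (B' + Chr h (F q) Fb (B q)))"
proof -
  define dh where "dh i j = (\<Sum>m\<in>UNIV. Fb$m * d4 m (\<lambda>y. h y i j) (F q))" for i j
  have 1: "has_dd (\<lambda>p. h (F p) i j * A p $ i * B p $ j) b q
     ((dh i j * A q $ i + h (F q) i j * A' $ i) * B q $ j + h (F q) i j * A q $ i * B' $ j)" for i j
    using has_dd_mult[OF has_dd_mult[OF has_dd_metric_compose[OF Fq F, of i j]]] A B unfolding has_dvec_def dh_def by blast
  have 2: "has_dd (\<lambda>p. hin h (F p) (A p) (B p)) b q
     (\<Sum>i\<in>UNIV. \<Sum>j\<in>UNIV. (dh i j * A q $ i + h (F q) i j * A' $ i) * B q $ j + h (F q) i j * A q $ i * B' $ j)"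
    unfolding hin_def by (intro has_dd_sum 1) simp_all
  have "(\<Sum>i\<in>UNIV. \<Sum>j\<in>UNIV. (dh i j * A q $ i + h (F q) i j * A' $ i) * B q $ j + h (F q) i j * A q $ i * B' $ j)
     = hin h (F q) A' (B q) + hin h (F q) (A q) B' + metric_deriv h (F q) Fb (A q) (B q)"
    unfolding hin_def metric_deriv_def dh_def sum_4 by algebra
  also have "\<dots> = hin h (F q) (A' + Chr h (F q) Fb (A q)) (B q) + hin h (F q) (A q) (B' + Chr h (F q) Fb (B q))"
    by (simp add: metric_deriv_eq_Chr[OF Fq] hin_lin)
  finally show ?thesis using 2 by simp
qed

lemma has_dvec_Chr:
  assumes Fq: "F q \<in> V" and F: "has_dvec F b q Fb" and X: "has_dvec X b q X'" and Y: "has_dvec Y b q Y'"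
  shows "has_dvec (\<lambda>p. Chr h (F p) (X p) (Y p)) b q
     (Chr_deriv h (F q) Fb (X q) (Y q) + Chr h (F q) X' (Y q) + Chr h (F q) (X q) Y')"
  unfolding has_dvec_def
proof
  fix k
  have 1: "has_dd (\<lambda>p. Gam h (F p) k a c * X p $ a * Y p $ c) b q
     ((Gam_deriv h (F q) Fb k a c * X q $ a + Gam h (F q) k a c * X' $ a) * Y q $ c + Gam h (F q) k a c * X q $ a * Y' $ c)" for a c
    using has_dd_mult[OF has_dd_mult[OF has_dd_Gam_compose[OF Fq F, of k a c]]] X Y unfolding has_dvec_def by blast
  have 2: "has_dd (\<lambda>p. Chr h (F p) (X p) (Y p) $ k) b q
     (\<Sum>a\<in>UNIV. \<Sum>c\<in>UNIV. (Gam_deriv h (F q) Fb k a c * X q $ a + Gam h (F q) k a c * X' $ a) * Y q $ c + Gam h (F q) k a c * X q $ a * Y' $ c)"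
    unfolding Chr_def vec_lambda_beta by (intro has_dd_sum 1) simp_all
  show "has_dd (\<lambda>p. Chr h (F p) (X p) (Y p) $ k) b q
     ((Chr_deriv h (F q) Fb (X q) (Y q) + Chr h (F q) X' (Y q) + Chr h (F q) (X q) Y') $ k)"
    using 2 unfolding Chr_deriv_def Chr_def vec_lambda_beta vector_add_component
    by (simp add: sum.distrib algebra_simps)
qed

lemma Dcov_commutator:
  assumes Fq: "F q \<in> V"
  and Fu: "has_dvec F (1,0) q Fu" and Fv: "has_dvec F (0,1) q Fv"
  and Fvu: "has_dvec (dvec (0,1) F) (1,0) q Fvu" and Fuv: "has_dvec (dvec (1,0) F) (0,1) q Fuv" and Fs: "Fvu = Fuv"
  and Au: "has_dvec A (1,0) q Au" and Av: "has_dvec A (0,1) q Av"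
  and Avu: "has_dvec (dvec (0,1) A) (1,0) q Avu" and Auv: "has_dvec (dvec (1,0) A) (0,1) q Auv" and As: "Avu = Auv"
  shows "Dcov h F (1,0) (Dcov h F (0,1) A) q - Dcov h F (0,1) (Dcov h F (1,0) A) q = Rvec h (F q) Fu Fv (A q)"
proof -
  have e1: "Dcov h F (0,1) A = (\<lambda>p. dvec (0,1) A p + Chr h (F p) (dvec (0,1) F p) (A p))"
    by (simp add: fun_eq_iff Dcov_eq_Chr)
  have e2: "Dcov h F (1,0) A = (\<lambda>p. dvec (1,0) A p + Chr h (F p) (dvec (1,0) F p) (A p))"
    by (simp add: fun_eq_iff Dcov_eq_Chr)
  have d1: "has_dvec (Dcov h F (0,1) A) (1,0) q (Avu + (Chr_deriv h (F q) Fu (dvec (0,1) F q) (A q) + Chr h (F q) Fvu (A q) + Chr h (F q) (dvec (0,1) F q) Au))"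
    unfolding e1 by (intro has_dvec_add Avu has_dvec_Chr Fq Fu Fvu Au)
  have d2: "has_dvec (Dcov h F (1,0) A) (0,1) q (Auv + (Chr_deriv h (F q) Fv (dvec (1,0) F q) (A q) + Chr h (F q) Fuv (A q) + Chr h (F q) (dvec (1,0) F q) Av))"
    unfolding e2 by (intro has_dvec_add Auv has_dvec_Chr Fq Fv Fuv Av)
  have fu: "dvec (1,0) F q = Fu" and fv: "dvec (0,1) F q = Fv" and au: "dvec (1,0) A q = Au" and av: "dvec (0,1) A q = Av"
    using Fu Fv Au Av by (simp_all add: has_dvec_imp_dvec)
  have "Dcov h F (1,0) (Dcov h F (0,1) A) q =
     Avu + (Chr_deriv h (F q) Fu Fv (A q) + Chr h (F q) Fvu (A q) + Chr h (F q) Fv Au) + Chr h (F q) Fu (Av + Chr h (F q) Fv (A q))"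
    unfolding Dcov_eq_Chr[where b="(1,0)" and W="Dcov h F (0,1) A"] has_dvec_imp_dvec[OF d1] fu fv
    by (simp add: Dcov_eq_Chr fv av)
  moreover have "Dcov h F (0,1) (Dcov h F (1,0) A) q =
     Auv + (Chr_deriv h (F q) Fv Fu (A q) + Chr h (F q) Fuv (A q) + Chr h (F q) Fu Av) + Chr h (F q) Fv (Au + Chr h (F q) Fu (A q))"
    unfolding Dcov_eq_Chr[where b="(0,1)" and W="Dcov h F (1,0) A"] has_dvec_imp_dvec[OF d2] fu fv
    by (simp add: Dcov_eq_Chr fu au)
  ultimately show ?thesis using Fs As by (simp add: Rvec_eq_Chr Chr_lin algebra_simps)
qed

end

section \<open>Curvature of a space form\<close>

lemma sum_mult_axis: "(\<Sum>m\<in>UNIV. f m * (axis i 1 :: real^'n)$m) = f i"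
proof -
  have "\<And>m. f m * (axis i 1 :: real^'n)$m = (if m = i then f m else 0)" by (simp add: axis_def)
  then show ?thesis by (simp only: sum.delta') simp
qed

definition form4 :: "(4 \<Rightarrow> 4 \<Rightarrow> 4 \<Rightarrow> 4 \<Rightarrow> real) \<Rightarrow> real^4 \<Rightarrow> real^4 \<Rightarrow> real^4 \<Rightarrow> real^4 \<Rightarrow> real" where
  "form4 t X Y Z W = (\<Sum>i\<in>UNIV. \<Sum>j\<in>UNIV. \<Sum>k\<in>UNIV. \<Sum>l\<in>UNIV. t i j k l * X$i * Y$j * Z$k * W$l)"

lemma form4_add1: "form4 t (X + X') Y Z W = form4 t X Y Z W + form4 t X' Y Z W"
  unfolding form4_def by (simp add: sum.distrib algebra_simps)
lemma form4_add2: "form4 t X (Y + Y') Z W = form4 t X Y Z W + form4 t X Y' Z W"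
  unfolding form4_def by (simp add: sum.distrib algebra_simps)
lemma form4_add3: "form4 t X Y (Z + Z') W = form4 t X Y Z W + form4 t X Y Z' W"
  unfolding form4_def by (simp add: sum.distrib algebra_simps)
lemma form4_add4: "form4 t X Y Z (W + W') = form4 t X Y Z W + form4 t X Y Z W'"
  unfolding form4_def by (simp add: sum.distrib algebra_simps)
lemma form4_scale1: "form4 t (c *\<^sub>R X) Y Z W = c * form4 t X Y Z W"
  unfolding form4_def by (simp add: sum_distrib_left algebra_simps)
lemma form4_scale2: "form4 t X (c *\<^sub>R Y) Z W = c * form4 t X Y Z W"
  unfolding form4_def by (simp add: sum_distrib_left algebra_simps)
lemma form4_scale3: "form4 t X Y (c *\<^sub>R Z) W = c * form4 t X Y Z W"
  unfolding form4_def by (simp add: sum_distrib_left algebra_simps)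
lemma form4_scale4: "form4 t X Y Z (c *\<^sub>R W) = c * form4 t X Y Z W"
  unfolding form4_def by (simp add: sum_distrib_left algebra_simps)

lemma form4_axis: "form4 t (axis i 1) (axis j 1) (axis k 1) (axis l 1) = t i j k l"
  unfolding form4_def by (simp add: sum_mult_axis)

lemma form4_antisym_diag:
  assumes a: "\<And>i j k l. t i j k l = - t j i k l"
  shows "form4 t Y Y Z W = 0"
proof -
  have "form4 t Y Y Z W = (\<Sum>i\<in>UNIV. \<Sum>j\<in>UNIV. \<Sum>k\<in>UNIV. \<Sum>l\<in>UNIV. - t j i k l * Y$i * Y$j * Z$k * W$l)"
    unfolding form4_def using a by (metis (no_types, lifting) sum.cong)
  also have "\<dots> = - (\<Sum>j\<in>UNIV. \<Sum>i\<in>UNIV. \<Sum>k\<in>UNIV. \<Sum>l\<in>UNIV. t j i k l * Y$j * Y$i * Z$k * W$l)"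
    by (subst sum.swap) (simp add: sum_negf algebra_simps)
  also have "\<dots> = - form4 t Y Y Z W" unfolding form4_def ..
  finally show ?thesis by simp
qed

text \<open>Polarising the vanishing sectional form and using pair symmetry yields the invariance
  \<open>t a b d c = t d a b c\<close>; combined with the Bianchi identity this gives \<open>3 t i j k l = 0\<close>.\<close>

lemma algebraic_curvature_tensor_eq_0:
  assumes a: "\<And>i j k l. t i j k l = - t j i k l"
    and c: "\<And>i j k l. t i j k l = - t i j l k"
    and b: "\<And>i j k l. t i j k l + t j k i l + t k i j l = 0"
    and s: "\<And>X Y. form4 t X Y Y X = 0"
  shows "t i j k l = 0"
proof -
  let ?e = "\<lambda>i. axis i (1::real) :: real^4"
  have P: "t a b d c + t a d b c + t c b d a + t c d b a = 0" for a b c d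
  proof -
    have "form4 t (?e a + ?e c) (?e b + ?e d) (?e b + ?e d) (?e a + ?e c) = 0" by (rule s)
    moreover have "form4 t (?e a) (?e b + ?e d) (?e b + ?e d) (?e a) = 0" by (rule s)
    moreover have "form4 t (?e c) (?e b + ?e d) (?e b + ?e d) (?e c) = 0" by (rule s)
    moreover have "form4 t (?e a + ?e c) (?e b) (?e b) (?e a + ?e c) = 0" by (rule s)
    moreover have "form4 t (?e a + ?e c) (?e d) (?e d) (?e a + ?e c) = 0" by (rule s)
    moreover have "form4 t (?e a) (?e b) (?e b) (?e a) = 0" by (rule s)
    moreover have "form4 t (?e a) (?e d) (?e d) (?e a) = 0" by (rule s)
    moreover have "form4 t (?e c) (?e b) (?e b) (?e c) = 0" by (rule s)
    moreover have "form4 t (?e c) (?e d) (?e d) (?e c) = 0" by (rule s)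
    ultimately show ?thesis
      by (simp add: form4_add1 form4_add2 form4_add3 form4_add4 form4_axis)
  qed
  have pair: "t a b c d = t c d a b" for a b c d
    using b[of a b c d] b[of b c d a] b[of c d a b] b[of d a b c]
      a[of a b c d] a[of b c d a] a[of c d a b] a[of d a b c]
      c[of a b c d] c[of b c d a] c[of c d a b] c[of d a b c]
      a[of c a b d] c[of c a b d] a[of d b c a] c[of d b c a] a[of a c d b] c[of a c d b]
      a[of b d a c] c[of b d a c] c[of a c b d] c[of b d c a] c[of c a d b] c[of d b a c]
      a[of c a d b] a[of d b a c] a[of a c b d] a[of b d c a]
      c[of b c a d] c[of c d b a] c[of d a c b] c[of a b d c]
    by linarith
  have cyc: "t a b d c = t d a b c" for a b c d
  proof -
    have "t c b d a = t a d b c" using pair[of c b d a] a[of d a c b] c[of a d c b] by linarith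
    moreover have "t c d b a = t a b d c" using pair[of c d b a] a[of b a c d] c[of a b c d] by linarith
    ultimately have "t a b d c = - t a d b c" using P[of a b d c] by linarith
    then show ?thesis using a[of a d b c] by linarith
  qed
  have "t i j k l + t j k i l + t k i j l = 0" by (rule b)
  moreover have "t j k i l = t i j k l" using cyc[of i j k l] cyc[of k i j l] by linarith
  moreover have "t k i j l = t i j k l" using cyc[of i j k l] by linarith
  ultimately show ?thesis by linarith
qed

text \<open>\<open>Rlow h x i j k l = h(R(\<partial>\<^sub>i,\<partial>\<^sub>j)\<partial>\<^sub>k, \<partial>\<^sub>l)\<close>, and \<open>Kform\<close> is the same tensor for the
  curvature \<open>R(X,Y)Z = h(Y,Z)X - h(X,Z)Y\<close> of constant sectional curvature 1.\<close>

definition Rlow :: "metric4 \<Rightarrow> real^4 \<Rightarrow> 4 \<Rightarrow> 4 \<Rightarrow> 4 \<Rightarrow> 4 \<Rightarrow> real" where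
  "Rlow h x i j k l = (\<Sum>m\<in>UNIV. Rc h x m i j k * h x m l)"

definition Kform :: "metric4 \<Rightarrow> real^4 \<Rightarrow> 4 \<Rightarrow> 4 \<Rightarrow> 4 \<Rightarrow> 4 \<Rightarrow> real" where
  "Kform h x i j k l = h x j k * h x i l - h x i k * h x j l"

lemma hin_Rvec_eq_form4: "hin h x (Rvec h x X Y Z) W = form4 (Rlow h x) X Y Z W"
  unfolding hin_def Rvec_def form4_def Rlow_def sum_4 vec_lambda_beta by algebra

lemma Rlow_axis: "hin h x (Rvec h x (axis i 1) (axis j 1) (axis k 1)) (axis l 1) = Rlow h x i j k l"
  by (simp add: hin_Rvec_eq_form4 form4_axis)

lemma form4_Kform: "form4 (Kform h x) X Y Z W = hin h x Y Z * hin h x X W - hin h x X Z * hin h x Y W"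
  unfolding hin_def form4_def Kform_def sum_4 by algebra

lemma form4_diff_scaled: "form4 (\<lambda>i j k l. t i j k l - c * s i j k l) X Y Z W = form4 t X Y Z W - c * form4 s X Y Z W"
  unfolding form4_def by (simp add: sum_subtractf sum_distrib_left algebra_simps)

lemma hin_axis: "hin h y (axis k 1) (axis l 1) = h y k l"
  unfolding hin_def by (simp add: sum_mult_axis)

lemma Rlow_antisym: "Rlow h x i j k l = - Rlow h x j i k l"
  unfolding Rlow_def Rc_def by (simp add: sum_negf[symmetric] algebra_simps sum_subtractf)

context riemannian_chart
begin

lemma Rvec_bianchi:
  assumes x: "x \<in> V"
  shows "Rvec h x X Y Z + Rvec h x Y Z X + Rvec h x Z X Y = 0"
proof -
  have "Chr_deriv h x X Y Z = Chr_deriv h x X Z Y" "Chr_deriv h x Y X Z = Chr_deriv h x Y Z X" "Chr_deriv h x Z Y X = Chr_deriv h x Z X Y"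
    using Chr_deriv_sym[OF x] by auto
  moreover have "Chr h x Y Z = Chr h x Z Y" "Chr h x X Z = Chr h x Z X" "Chr h x Y X = Chr h x X Y"
    using Chr_sym[OF x] by auto
  ultimately show ?thesis by (simp add: Rvec_eq_Chr algebra_simps)
qed

lemma Rlow_bianchi: "x \<in> V \<Longrightarrow> Rlow h x i j k l + Rlow h x j k i l + Rlow h x k i j l = 0"
  using Rvec_bianchi[of x "axis i 1" "axis j 1" "axis k 1"]
  by (metis Rlow_axis hin_add_left hin_zero_left)

lemma dd_dd_hin_affine_plane:
  fixes X Y Z W :: "real^4" and b c :: "real \<times> real"
  assumes x: "x \<in> V"
  defines "P \<equiv> affine_plane x X Y"
    and "vb \<equiv> fst b *\<^sub>R X + snd b *\<^sub>R Y" and "vc \<equiv> fst c *\<^sub>R X + snd c *\<^sub>R Y"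
  shows "dd c (dd b (\<lambda>p. hin h (P p) Z W)) 0
    = hin h x (Chr_deriv h x vc vb Z + Chr h x vc (Chr h x vb Z)) W + hin h x (Chr h x vb Z) (Chr h x vc W)
      + (hin h x (Chr h x vc Z) (Chr h x vb W) + hin h x Z (Chr_deriv h x vc vb W + Chr h x vc (Chr h x vb W)))"
proof -
  have P0: "P 0 = x"
    by (simp add: P_def affine_plane_def)
  have PV: "open (P -` V)" "0 \<in> P -` V"
    using open_vimage[OF V_open continuous_on_affine_plane] x P0 by (simp_all add: P_def)
  have HPb: "has_dvec P b p vb" and HPc: "has_dvec P c p vc" for p
    unfolding P_def vb_def vc_def by (rule has_dvec_affine_plane)+
  have Chr_c: "has_dvec (\<lambda>p. Chr h (P p) vb Y') c 0 (Chr_deriv h x vc vb Y')" for Y'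
    using has_dvec_Chr[OF _ HPc has_dvec_const has_dvec_const, of 0 vb Y'] x by (simp add: P0 Chr_lin)
  have "dd c (dd b (\<lambda>p. hin h (P p) Z W)) 0
      = dd c (\<lambda>p. hin h (P p) (Chr h (P p) vb Z) W + hin h (P p) Z (Chr h (P p) vb W)) 0"
    using PV
  proof (rule dd_cong)
    fix p assume "p \<in> P -` V"
    then show "dd b (\<lambda>p. hin h (P p) Z W) p = hin h (P p) (Chr h (P p) vb Z) W + hin h (P p) Z (Chr h (P p) vb W)"
      using has_dd_imp_dd[OF has_dd_hin[OF _ HPb has_dvec_const has_dvec_const]] by simp
  qed
  also have "\<dots> = hin h x (Chr_deriv h x vc vb Z + Chr h x vc (Chr h x vb Z)) W + hin h x (Chr h x vb Z) (Chr h x vc W)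
      + (hin h x (Chr h x vc Z) (Chr h x vb W) + hin h x Z (Chr_deriv h x vc vb W + Chr h x vc (Chr h x vb W)))"
    using has_dd_imp_dd[OF has_dd_add[OF has_dd_hin[OF _ HPc Chr_c has_dvec_const]
        has_dd_hin[OF _ HPc has_dvec_const Chr_c]]] x by (simp add: P0)
  finally show ?thesis .
qed

text \<open>Metric compatibility makes \<open>R(X,Y)\<close> skew-adjoint: the two orders of differentiating
  \<open>h(Z,W)\<close> along a coordinate plane agree by Schwarz, and their difference is
  \<open>h(R(X,Y)Z,W) + h(Z,R(X,Y)W)\<close>.\<close>

lemma Rlow_antisym_last:
  assumes x: "x \<in> V"
  shows "Rlow h x a b k l = - Rlow h x a b l k"
proof -
  define ea where "ea = (axis a 1 :: real^4)"
  define eb where "eb = (axis b 1 :: real^4)"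
  let ?P = "affine_plane x ea eb" and ?f = "\<lambda>y. h y k l"
  have u: "dd (1,0) (\<lambda>p. G (?P p)) = (\<lambda>p. dd ea G (?P p))"
    and v: "dd (0,1) (\<lambda>p. G (?P p)) = (\<lambda>p. dd eb G (?P p))" for G
    by (simp_all add: fun_eq_iff dd_affine_plane)
  have P0: "?P 0 = x"
    by (simp add: affine_plane_def)
  have "dd (1,0) (dd (0,1) (\<lambda>p. ?f (?P p))) 0 = dd ea (dd eb ?f) x"
    by (simp add: u[of "dd eb ?f"] v[of ?f] P0)
  also have "\<dots> = dd eb (dd ea ?f) x"
    by (rule Cinf_on_dd_commute[OF V_open metric_Cinf]) (simp_all add: ea_def eb_def x)
  also have "\<dots> = dd (0,1) (dd (1,0) (\<lambda>p. ?f (?P p))) 0"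
    by (simp add: u[of ?f] v[of "dd ea ?f"] P0)
  finally have "hin h x (Rvec h x ea eb (axis k 1)) (axis l 1) + hin h x (axis k 1) (Rvec h x ea eb (axis l 1)) = 0"
    using dd_dd_hin_affine_plane[OF x, where X=ea and Y=eb and b="(0,1)" and c="(1,0)" and Z="axis k 1" and W="axis l 1"]
      dd_dd_hin_affine_plane[OF x, where X=ea and Y=eb and b="(1,0)" and c="(0,1)" and Z="axis k 1" and W="axis l 1"]
    by (simp add: hin_axis Rvec_eq_Chr hin_lin algebra_simps)
  then show ?thesis
    using hin_sym[OF x, of "axis k 1"] Rlow_axis[of h x a b k l] Rlow_axis[of h x a b l k]
    by (simp add: ea_def eb_def)
qed

end

lemma Kform_antisym: "Kform h x i j k l = - Kform h x j i k l"
  unfolding Kform_def by (simp add: algebra_simps)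

lemma Kform_antisym_last: "Kform h x i j k l = - Kform h x i j l k"
  unfolding Kform_def by (simp add: algebra_simps)

context riemannian_chart
begin

lemma Kform_bianchi: "x \<in> V \<Longrightarrow> Kform h x i j k l + Kform h x j k i l + Kform h x k i j l = 0"
  unfolding Kform_def using metric_sym[of x i k] metric_sym[of x j i] metric_sym[of x k j] by (simp add: algebra_simps)

lemma gram_det_pos:
  assumes x: "x \<in> V" and ind: "\<forall>a b. a *\<^sub>R X + b *\<^sub>R Y = 0 \<longrightarrow> a = 0 \<and> b = 0"
  shows "hin h x X X * hin h x Y Y - (hin h x X Y)^2 > 0"
proof -
  have Y0: "Y \<noteq> 0" using ind[rule_format, of 0 1] by auto
  define gY where "gY = hin h x Y Y"
  have gY: "gY > 0" unfolding gY_def using metric_pos[OF x Y0] .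
  define v where "v = gY *\<^sub>R X - hin h x X Y *\<^sub>R Y"
  have "v \<noteq> 0"
  proof
    assume "v = 0"
    then have "gY *\<^sub>R X + (- hin h x X Y) *\<^sub>R Y = 0" by (simp add: v_def)
    from ind[rule_format, OF this] gY show False by simp
  qed
  then have vpos: "hin h x v v > 0" using metric_pos[OF x] by blast
  have sym: "hin h x Y X = hin h x X Y" using hin_sym[OF x] .
  have "hin h x v v = gY * (hin h x X X * gY - (hin h x X Y)^2)"
    unfolding v_def by (simp add: hin_lin sym gY_def power2_eq_square algebra_simps)
  then have "gY * (hin h x X X * gY - (hin h x X Y)^2) > 0" using vpos by simp
  then show ?thesis using gY by (simp add: gY_def zero_less_mult_iff)
qed

lemma form4_sectional_eq_0:
  assumes sf: "constant_sectional_curvature_on V h L0" and x: "x \<in> V"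
  shows "form4 (\<lambda>i j k l. Rlow h x i j k l - L0 * Kform h x i j k l) X Y Y X = 0"
proof -
  let ?t = "\<lambda>i j k l. Rlow h x i j k l - L0 * Kform h x i j k l"
  have ta: "?t i j k l = - ?t j i k l" for i j k l
    using Rlow_antisym[of h x i j k l] Kform_antisym[of h x i j k l] by simp
  show ?thesis
  proof (cases "\<forall>a b. a *\<^sub>R X + b *\<^sub>R Y = 0 \<longrightarrow> a = 0 \<and> b = 0")
    case True
    have "sectional_curvature h x X Y = L0" using sf x True unfolding constant_sectional_curvature_on_def by blast
    moreover have "hin h x X X * hin h x Y Y - (hin h x X Y)^2 > 0" using gram_det_pos[OF x True] .
    ultimately have "hin h x (Rvec h x X Y Y) X = L0 * (hin h x X X * hin h x Y Y - (hin h x X Y)^2)"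
      unfolding sectional_curvature_def by (simp add: field_simps)
    moreover have "hin h x Y X = hin h x X Y" using hin_sym[OF x] .
    ultimately show ?thesis
      by (simp add: form4_diff_scaled form4_Kform hin_Rvec_eq_form4[symmetric] power2_eq_square algebra_simps)
  next
    case False
    then obtain a b where ab: "a *\<^sub>R X + b *\<^sub>R Y = 0" "a \<noteq> 0 \<or> b \<noteq> 0" by blast
    show ?thesis
    proof (cases "a = 0")
      case False
      have "X = (1/a) *\<^sub>R (a *\<^sub>R X)" using False by simp
      also have "a *\<^sub>R X = - (b *\<^sub>R Y)" using ab(1) by (simp add: eq_neg_iff_add_eq_0)
      finally have "X = (- b / a) *\<^sub>R Y" by simp
      then obtain c where "X = c *\<^sub>R Y" by blast
      then show ?thesis by (simp only: form4_scale1 form4_scale4 form4_antisym_diag[OF ta] mult_zero_right)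
    next
      case True
      then have "b \<noteq> 0" using ab(2) by simp
      have "Y = (1/b) *\<^sub>R (b *\<^sub>R Y)" using \<open>b \<noteq> 0\<close> by simp
      also have "b *\<^sub>R Y = - (a *\<^sub>R X)" using ab(1) by (simp add: eq_neg_iff_add_eq_0 add.commute)
      finally have "Y = (- a / b) *\<^sub>R X" by simp
      then obtain c where "Y = c *\<^sub>R X" by blast
      then show ?thesis by (simp only: form4_scale2 form4_scale3 form4_antisym_diag[OF ta] mult_zero_right)
    qed
  qed
qed

lemma space_form_curvature:
  assumes sf: "constant_sectional_curvature_on V h L0" and x: "x \<in> V"
  shows "hin h x (Rvec h x X Y Z) W = L0 * (hin h x Y Z * hin h x X W - hin h x X Z * hin h x Y W)"
proof -
  let ?t = "\<lambda>i j k l. Rlow h x i j k l - L0 * Kform h x i j k l"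
  have t0: "?t i j k l = 0" for i j k l
  proof (rule algebraic_curvature_tensor_eq_0)
    show "?t i j k l = - ?t j i k l" for i j k l
      using Rlow_antisym[of h x i j k l] Kform_antisym[of h x i j k l] by simp
    show "?t i j k l = - ?t i j l k" for i j k l
      using Rlow_antisym_last[OF x, of i j k l] Kform_antisym_last[of h x i j k l] by simp
    show "?t i j k l + ?t j k i l + ?t k i j l = 0" for i j k l
    proof -
      have "L0 * (Kform h x i j k l + Kform h x j k i l + Kform h x k i j l) = 0"
        by (simp only: Kform_bianchi[OF x, of i j k l] mult_zero_right)
      then have "L0 * Kform h x i j k l + L0 * Kform h x j k i l + L0 * Kform h x k i j l = 0"
        by (simp only: distrib_left)
      then show ?thesis using Rlow_bianchi[OF x, of i j k l] by linarith
    qed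
    show "form4 ?t X Y Y X = 0" for X Y using form4_sectional_eq_0[OF sf x] .
  qed
  have "form4 ?t X Y Z W = 0" unfolding form4_def using t0 by simp
  then show ?thesis by (simp add: form4_diff_scaled form4_Kform hin_Rvec_eq_form4)
qed

end

locale conformal_surface = riemannian_chart V h for V h +
  fixes L0 :: real and U :: "(real \<times> real) set" and F :: "real \<times> real \<Rightarrow> real^4"
    and lam :: "real \<times> real \<Rightarrow> real"
    and N1 N2 :: "real \<times> real \<Rightarrow> real^4"
    and \<alpha>1 \<alpha>2 \<alpha>3 \<beta>1 \<beta>2 \<beta>3 \<mu>1 \<mu>2 :: "real \<times> real \<Rightarrow> real"
  assumes space_form: "constant_sectional_curvature_on V h L0"
    and U_open: "open U"
    and F_into: "F ` U \<subseteq> V"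
    and F_smooth: "\<forall>k. Cinf_on U (\<lambda>p. F p $ k)"
    and lam_smooth: "Cinf_on U lam"
    and conf1: "\<forall>p\<in>U. hin h (F p) (T1 F p) (T1 F p) = exp (2 * lam p)"
    and conf2: "\<forall>p\<in>U. hin h (F p) (T2 F p) (T2 F p) = exp (2 * lam p)"
    and conf12: "\<forall>p\<in>U. hin h (F p) (T1 F p) (T2 F p) = 0"
    and N_smooth: "\<forall>k. Cinf_on U (\<lambda>p. N1 p $ k) \<and> Cinf_on U (\<lambda>p. N2 p $ k)"
    and N_normal: "\<forall>p\<in>U. hin h (F p) (N1 p) (T1 F p) = 0 \<and> hin h (F p) (N1 p) (T2 F p) = 0
                       \<and> hin h (F p) (N2 p) (T1 F p) = 0 \<and> hin h (F p) (N2 p) (T2 F p) = 0"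
    and N_frame: "\<forall>p\<in>U. hin h (F p) (N1 p) (N1 p) = exp (2 * lam p)
                       \<and> hin h (F p) (N2 p) (N2 p) = exp (2 * lam p)
                       \<and> hin h (F p) (N1 p) (N2 p) = 0"
    and sigma11: "\<forall>p\<in>U. sff h F (1, 0) (T1 F) p = \<alpha>1 p *\<^sub>R N1 p + \<beta>1 p *\<^sub>R N2 p"
    and sigma12: "\<forall>p\<in>U. sff h F (1, 0) (T2 F) p = \<alpha>2 p *\<^sub>R N1 p + \<beta>2 p *\<^sub>R N2 p"
    and sigma22: "\<forall>p\<in>U. sff h F (0, 1) (T2 F) p = \<alpha>3 p *\<^sub>R N1 p + \<beta>3 p *\<^sub>R N2 p"
    and nconu: "\<forall>p\<in>U. ncon h F (1, 0) N1 p = pu lam p *\<^sub>R N1 p + \<mu>1 p *\<^sub>R N2 p"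
    and nconv: "\<forall>p\<in>U. ncon h F (0, 1) N1 p = pv lam p *\<^sub>R N1 p + \<mu>2 p *\<^sub>R N2 p"
begin

definition smooth_field :: "(real \<times> real \<Rightarrow> real^4) \<Rightarrow> bool" where
  "smooth_field A \<longleftrightarrow> (\<forall>k. Cinf_on U (\<lambda>q. A q $ k))"

abbreviation E :: "real \<times> real \<Rightarrow> real" where "E q \<equiv> exp (2 * lam q)"
abbreviation Du :: "(real \<times> real \<Rightarrow> real^4) \<Rightarrow> real \<times> real \<Rightarrow> real^4" where "Du A \<equiv> Dcov h F (1,0) A"
abbreviation Dv :: "(real \<times> real \<Rightarrow> real^4) \<Rightarrow> real \<times> real \<Rightarrow> real^4" where "Dv A \<equiv> Dcov h F (0,1) A"
abbreviation g :: "real \<times> real \<Rightarrow> real^4 \<Rightarrow> real^4 \<Rightarrow> real" where "g q \<equiv> hin h (F q)"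

lemma F_in_V: "q \<in> U \<Longrightarrow> F q \<in> V"
  using F_into by auto

lemma g_sym: "q \<in> U \<Longrightarrow> g q X Y = g q Y X"
  using hin_sym[OF F_in_V] by blast

lemma smooth_field_dvec: "smooth_field A \<Longrightarrow> b \<in> Basis \<Longrightarrow> smooth_field (dvec b A)"
  unfolding smooth_field_def dvec_def by (simp add: Cinf_on_dd)

lemma smooth_field_has_dvec: "smooth_field A \<Longrightarrow> b \<in> Basis \<Longrightarrow> q \<in> U \<Longrightarrow> has_dvec A b q (dvec b A q)"
  unfolding smooth_field_def has_dvec_def dvec_def by (auto intro: Cinf_on_has_dd)

lemma smooth_field_dvec_commute:
  "smooth_field A \<Longrightarrow> q \<in> U \<Longrightarrow> dvec (1,0) (dvec (0,1) A) q = dvec (0,1) (dvec (1,0) A) q"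
  unfolding smooth_field_def dvec_def vec_eq_iff vec_lambda_beta
  by (auto intro: Cinf_on_dd_commute[OF U_open])

lemma smooth_F: "smooth_field F"
  using F_smooth by (simp add: smooth_field_def)

lemma smooth_N1: "smooth_field N1" and smooth_N2: "smooth_field N2"
  using N_smooth by (simp_all add: smooth_field_def)

lemma smooth_T1: "smooth_field (T1 F)" and smooth_T2: "smooth_field (T2 F)"
  unfolding T1_def T2_def by (simp_all add: smooth_field_dvec[OF smooth_F])

lemma has_dd_E: "q \<in> U \<Longrightarrow> b \<in> Basis \<Longrightarrow> has_dd E b q (2 * dd b lam q * E q)"
  using has_dd_exp[OF has_dd_cmult[OF Cinf_on_has_dd[OF lam_smooth], of b q 2]]
  by (simp add: mult.commute)

lemma has_dd_g:
  assumes A: "smooth_field A" and B: "smooth_field B" and q: "q \<in> U" and b: "b \<in> Basis"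
  shows "has_dd (\<lambda>q. g q (A q) (B q)) b q (g q (Dcov h F b A q) (B q) + g q (A q) (Dcov h F b B q))"
  using has_dd_hin[OF F_in_V[OF q] smooth_field_has_dvec[OF smooth_F b q]
      smooth_field_has_dvec[OF A b q] smooth_field_has_dvec[OF B b q]]
  by (simp add: Dcov_eq_Chr)

lemma has_dd_g_Dcov:
  assumes A: "smooth_field A" and B: "smooth_field B" and q: "q \<in> U"
    and b: "b \<in> Basis" and c: "c \<in> Basis"
  shows "has_dd (\<lambda>q. g q (Dcov h F b A q) (B q)) c q
     (g q (Dcov h F c (Dcov h F b A) q) (B q) + g q (Dcov h F b A q) (Dcov h F c B q))"
proof -
  have e: "Dcov h F b A = (\<lambda>q. dvec b A q + Chr h (F q) (dvec b F q) (A q))"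
    by (simp add: fun_eq_iff Dcov_eq_Chr)
  define X where "X = dvec c (dvec b A) q + (Chr_deriv h (F q) (dvec c F q) (dvec b F q) (A q)
      + Chr h (F q) (dvec c (dvec b F) q) (A q) + Chr h (F q) (dvec b F q) (dvec c A q))"
  have HX: "has_dvec (Dcov h F b A) c q X"
    unfolding e X_def
    by (intro has_dvec_add smooth_field_has_dvec[OF smooth_field_dvec[OF A b] c q] has_dvec_Chr
        F_in_V[OF q] smooth_field_has_dvec[OF smooth_F c q]
        smooth_field_has_dvec[OF smooth_field_dvec[OF smooth_F b] c q] smooth_field_has_dvec[OF A c q])
  have "dvec c (Dcov h F b A) q = X"
    using has_dvec_imp_dvec[OF HX] .
  then show ?thesis
    using has_dd_hin[OF F_in_V[OF q] smooth_field_has_dvec[OF smooth_F c q] HX smooth_field_has_dvec[OF B c q]]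
    by (simp add: Dcov_eq_Chr[where b=c and W="Dcov h F b A"] Dcov_eq_Chr[where b=c and W=B])
qed

lemma Dcov_commutator_uv:
  assumes A: "smooth_field A" and q: "q \<in> U"
  shows "Du (Dv A) q - Dv (Du A) q = Rvec h (F q) (T1 F q) (T2 F q) (A q)"
  unfolding T1_def T2_def
  by (rule Dcov_commutator[OF F_in_V[OF q]
        smooth_field_has_dvec[OF smooth_F _ q] smooth_field_has_dvec[OF smooth_F _ q]
        smooth_field_has_dvec[OF smooth_field_dvec[OF smooth_F] _ q]
        smooth_field_has_dvec[OF smooth_field_dvec[OF smooth_F] _ q]
        smooth_field_dvec_commute[OF smooth_F q]
        smooth_field_has_dvec[OF A _ q] smooth_field_has_dvec[OF A _ q]
        smooth_field_has_dvec[OF smooth_field_dvec[OF A] _ q]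
        smooth_field_has_dvec[OF smooth_field_dvec[OF A] _ q]
        smooth_field_dvec_commute[OF A q]]) simp_all

lemma Dv_T1_eq_Du_T2: "q \<in> U \<Longrightarrow> Dv (T1 F) q = Du (T2 F) q"
  unfolding T1_def T2_def Dcov_eq_Chr
  using smooth_field_dvec_commute[OF smooth_F] Chr_sym[OF F_in_V] by metis

lemma g_Dcov_sum_eq_0:
  assumes "\<forall>q\<in>U. g q (A q) (B q) = 0" and "smooth_field A" "smooth_field B" "q \<in> U" "b \<in> Basis"
  shows "g q (Dcov h F b A q) (B q) + g q (A q) (Dcov h F b B q) = 0"
proof -
  have "dd b (\<lambda>q. g q (A q) (B q)) q = dd b (\<lambda>q. 0) q"
    using assms(1,4) by (intro dd_cong[OF U_open]) auto
  then show ?thesis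
    using has_dd_imp_dd[OF has_dd_g[OF assms(2-5)]] has_dd_imp_dd[OF has_dd_const] by simp
qed

lemma g_Dcov_sum_eq_E:
  assumes "\<forall>q\<in>U. g q (A q) (B q) = E q" and "smooth_field A" "smooth_field B" "q \<in> U" "b \<in> Basis"
  shows "g q (Dcov h F b A q) (B q) + g q (A q) (Dcov h F b B q) = 2 * dd b lam q * E q"
proof -
  have "dd b (\<lambda>q. g q (A q) (B q)) q = dd b E q"
    using assms(1,4) by (intro dd_cong[OF U_open]) auto
  then show ?thesis
    using has_dd_imp_dd[OF has_dd_g[OF assms(2-5)]] has_dd_imp_dd[OF has_dd_E[OF assms(4,5)]] by simp
qed

subsection \<open>Gauss and Weingarten formulas\<close>

lemma frame_products:
  assumes q: "q \<in> U"
  shows "g q (T1 F q) (T1 F q) = E q" "g q (T2 F q) (T2 F q) = E q"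
    "g q (T1 F q) (T2 F q) = 0" "g q (T2 F q) (T1 F q) = 0"
    "g q (N1 q) (T1 F q) = 0" "g q (N1 q) (T2 F q) = 0" "g q (N2 q) (T1 F q) = 0" "g q (N2 q) (T2 F q) = 0"
    "g q (T1 F q) (N1 q) = 0" "g q (T2 F q) (N1 q) = 0" "g q (T1 F q) (N2 q) = 0" "g q (T2 F q) (N2 q) = 0"
    "g q (N1 q) (N1 q) = E q" "g q (N2 q) (N2 q) = E q" "g q (N1 q) (N2 q) = 0" "g q (N2 q) (N1 q) = 0"
  using conf1 conf2 conf12 N_normal N_frame q g_sym[OF q] by metis+

lemma g_Dcov_skew:
  assumes "\<forall>q\<in>U. g q (A q) (B q) = 0" "smooth_field A" "smooth_field B" "q \<in> U" "b \<in> Basis"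
  shows "g q (Dcov h F b A q) (B q) = - g q (A q) (Dcov h F b B q)"
  using g_Dcov_sum_eq_0[OF assms] by simp

lemma g_Dcov_self:
  assumes "\<forall>q\<in>U. g q (A q) (A q) = E q" "smooth_field A" "q \<in> U" "b \<in> Basis"
  shows "g q (Dcov h F b A q) (A q) = dd b lam q * E q"
  using g_Dcov_sum_eq_E[OF assms(1,2,2,3,4)] g_sym[OF assms(3), of "A q" "Dcov h F b A q"] by simp

lemma tang_eq:
  "q \<in> U \<Longrightarrow> tang h F q W = (g q W (T1 F q) / E q) *\<^sub>R T1 F q + (g q W (T2 F q) / E q) *\<^sub>R T2 F q"
  using conf1 conf2 conf12 unfolding tang_def Let_def by (simp add: power2_eq_square field_simps)

lemma tangent_normal_decomp:
  "q \<in> U \<Longrightarrow> W = (g q W (T1 F q) / E q) *\<^sub>R T1 F q + (g q W (T2 F q) / E q) *\<^sub>R T2 F q + nor h F q W"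
  unfolding nor_def by (simp add: tang_eq)

text \<open>The tangential components of the covariant derivatives of the frame are the Christoffel
  symbols of the conformal metric \<open>E (du\<^sup>2 + dv\<^sup>2)\<close>.\<close>

lemma tangential_components:
  assumes q: "q \<in> U"
  shows "g q (Du (T1 F) q) (T1 F q) = pu lam q * E q"
    and "g q (Du (T1 F) q) (T2 F q) = - pv lam q * E q"
    and "g q (Du (T2 F) q) (T1 F q) = pv lam q * E q"
    and "g q (Du (T2 F) q) (T2 F q) = pu lam q * E q"
    and "g q (Dv (T2 F) q) (T1 F q) = - pu lam q * E q"
    and "g q (Dv (T2 F) q) (T2 F q) = pv lam q * E q"
proof -
  have o: "\<forall>q\<in>U. g q (T1 F q) (T1 F q) = E q" "\<forall>q\<in>U. g q (T2 F q) (T2 F q) = E q"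
    "\<forall>q\<in>U. g q (T1 F q) (T2 F q) = 0" "\<forall>q\<in>U. g q (T2 F q) (T1 F q) = 0"
    using frame_products by blast+
  show uu: "g q (Du (T1 F) q) (T1 F q) = pu lam q * E q"
    using g_Dcov_self[OF o(1) smooth_T1 q, of "(1,0)"] by (simp add: pu_def)
  have vv: "g q (Dv (T1 F) q) (T1 F q) = pv lam q * E q"
    using g_Dcov_self[OF o(1) smooth_T1 q, of "(0,1)"] by (simp add: pv_def)
  show uu2: "g q (Du (T2 F) q) (T2 F q) = pu lam q * E q"
    using g_Dcov_self[OF o(2) smooth_T2 q, of "(1,0)"] by (simp add: pu_def)
  show "g q (Dv (T2 F) q) (T2 F q) = pv lam q * E q"
    using g_Dcov_self[OF o(2) smooth_T2 q, of "(0,1)"] by (simp add: pv_def)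
  show uv: "g q (Du (T2 F) q) (T1 F q) = pv lam q * E q"
    using vv Dv_T1_eq_Du_T2[OF q] by simp
  show "g q (Du (T1 F) q) (T2 F q) = - pv lam q * E q"
    using g_Dcov_skew[OF o(3) smooth_T1 smooth_T2 q, of "(1,0)"] uv
      g_sym[OF q, of "T1 F q" "Du (T2 F) q"] by simp
  show "g q (Dv (T2 F) q) (T1 F q) = - pu lam q * E q"
    using g_Dcov_skew[OF o(4) smooth_T2 smooth_T1 q, of "(0,1)"] Dv_T1_eq_Du_T2[OF q] uu2
      g_sym[OF q, of "T2 F q" "Du (T2 F) q"] by simp
qed

lemma gauss_formulas:
  assumes q: "q \<in> U"
  shows "Du (T1 F) q = pu lam q *\<^sub>R T1 F q - pv lam q *\<^sub>R T2 F q + \<alpha>1 q *\<^sub>R N1 q + \<beta>1 q *\<^sub>R N2 q"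
    and "Du (T2 F) q = pv lam q *\<^sub>R T1 F q + pu lam q *\<^sub>R T2 F q + \<alpha>2 q *\<^sub>R N1 q + \<beta>2 q *\<^sub>R N2 q"
    and "Dv (T1 F) q = pv lam q *\<^sub>R T1 F q + pu lam q *\<^sub>R T2 F q + \<alpha>2 q *\<^sub>R N1 q + \<beta>2 q *\<^sub>R N2 q"
    and "Dv (T2 F) q = - pu lam q *\<^sub>R T1 F q + pv lam q *\<^sub>R T2 F q + \<alpha>3 q *\<^sub>R N1 q + \<beta>3 q *\<^sub>R N2 q"
proof -
  show uT1: "Du (T1 F) q = pu lam q *\<^sub>R T1 F q - pv lam q *\<^sub>R T2 F q + \<alpha>1 q *\<^sub>R N1 q + \<beta>1 q *\<^sub>R N2 q"
    using tangent_normal_decomp[OF q, of "Du (T1 F) q"] sigma11 tangential_components[OF q] q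
    unfolding sff_def by simp
  show uT2: "Du (T2 F) q = pv lam q *\<^sub>R T1 F q + pu lam q *\<^sub>R T2 F q + \<alpha>2 q *\<^sub>R N1 q + \<beta>2 q *\<^sub>R N2 q"
    using tangent_normal_decomp[OF q, of "Du (T2 F) q"] sigma12 tangential_components[OF q] q
    unfolding sff_def by simp
  then show "Dv (T1 F) q = pv lam q *\<^sub>R T1 F q + pu lam q *\<^sub>R T2 F q + \<alpha>2 q *\<^sub>R N1 q + \<beta>2 q *\<^sub>R N2 q"
    using Dv_T1_eq_Du_T2[OF q] by simp
  show "Dv (T2 F) q = - pu lam q *\<^sub>R T1 F q + pv lam q *\<^sub>R T2 F q + \<alpha>3 q *\<^sub>R N1 q + \<beta>3 q *\<^sub>R N2 q"
    using tangent_normal_decomp[OF q, of "Dv (T2 F) q"] sigma22 tangential_components[OF q] q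
    unfolding sff_def by simp
qed

lemma weingarten_formulas_N1:
  assumes q: "q \<in> U"
  shows "Du N1 q = - \<alpha>1 q *\<^sub>R T1 F q - \<alpha>2 q *\<^sub>R T2 F q + pu lam q *\<^sub>R N1 q + \<mu>1 q *\<^sub>R N2 q"
    and "Dv N1 q = - \<alpha>2 q *\<^sub>R T1 F q - \<alpha>3 q *\<^sub>R T2 F q + pv lam q *\<^sub>R N1 q + \<mu>2 q *\<^sub>R N2 q"
proof -
  have "g q (Du N1 q) (T1 F q) = - \<alpha>1 q * E q" "g q (Du N1 q) (T2 F q) = - \<alpha>2 q * E q"
    "g q (Dv N1 q) (T1 F q) = - \<alpha>2 q * E q" "g q (Dv N1 q) (T2 F q) = - \<alpha>3 q * E q"
    using g_Dcov_skew[OF _ smooth_N1 smooth_T1 q] g_Dcov_skew[OF _ smooth_N1 smooth_T2 q]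
      N_normal gauss_formulas[OF q] frame_products[OF q] by (simp_all add: hin_lin)
  then show "Du N1 q = - \<alpha>1 q *\<^sub>R T1 F q - \<alpha>2 q *\<^sub>R T2 F q + pu lam q *\<^sub>R N1 q + \<mu>1 q *\<^sub>R N2 q"
    and "Dv N1 q = - \<alpha>2 q *\<^sub>R T1 F q - \<alpha>3 q *\<^sub>R T2 F q + pv lam q *\<^sub>R N1 q + \<mu>2 q *\<^sub>R N2 q"
    using tangent_normal_decomp[OF q, of "Du N1 q"] tangent_normal_decomp[OF q, of "Dv N1 q"]
      nconu nconv q unfolding ncon_def by simp_all
qed

text \<open>\<open>N1\<close> and \<open>N2\<close> are not shown to span the normal space, so \<open>Du N2\<close> and \<open>Dv N2\<close> are only
  determined through their products with the frame.\<close>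

lemma N2_derivative_components:
  assumes q: "q \<in> U"
  shows "g q (T1 F q) (Du N2 q) = - \<beta>1 q * E q" "g q (T2 F q) (Du N2 q) = - \<beta>2 q * E q"
    "g q (T1 F q) (Dv N2 q) = - \<beta>2 q * E q" "g q (T2 F q) (Dv N2 q) = - \<beta>3 q * E q"
    "g q (N1 q) (Du N2 q) = - \<mu>1 q * E q" "g q (N1 q) (Dv N2 q) = - \<mu>2 q * E q"
    "g q (N2 q) (Du N2 q) = pu lam q * E q" "g q (N2 q) (Dv N2 q) = pv lam q * E q"
proof -
  have o: "\<forall>q\<in>U. g q (T1 F q) (N2 q) = 0" "\<forall>q\<in>U. g q (T2 F q) (N2 q) = 0"
    "\<forall>q\<in>U. g q (N1 q) (N2 q) = 0" "\<forall>q\<in>U. g q (N2 q) (N2 q) = E q"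
    using frame_products by blast+
  show "g q (T1 F q) (Du N2 q) = - \<beta>1 q * E q" "g q (T2 F q) (Du N2 q) = - \<beta>2 q * E q"
    "g q (T1 F q) (Dv N2 q) = - \<beta>2 q * E q" "g q (T2 F q) (Dv N2 q) = - \<beta>3 q * E q"
    "g q (N1 q) (Du N2 q) = - \<mu>1 q * E q" "g q (N1 q) (Dv N2 q) = - \<mu>2 q * E q"
    using g_Dcov_skew[OF o(1) smooth_T1 smooth_N2 q, of "(1,0)"] g_Dcov_skew[OF o(1) smooth_T1 smooth_N2 q, of "(0,1)"]
      g_Dcov_skew[OF o(2) smooth_T2 smooth_N2 q, of "(1,0)"] g_Dcov_skew[OF o(2) smooth_T2 smooth_N2 q, of "(0,1)"]
      g_Dcov_skew[OF o(3) smooth_N1 smooth_N2 q, of "(1,0)"] g_Dcov_skew[OF o(3) smooth_N1 smooth_N2 q, of "(0,1)"]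
      gauss_formulas[OF q] weingarten_formulas_N1[OF q] frame_products[OF q] by (simp_all add: hin_lin)
  show "g q (N2 q) (Du N2 q) = pu lam q * E q" "g q (N2 q) (Dv N2 q) = pv lam q * E q"
    using g_Dcov_self[OF o(4) smooth_N2 q, of "(1,0)"] g_Dcov_self[OF o(4) smooth_N2 q, of "(0,1)"]
      g_sym[OF q, of "Du N2 q" "N2 q"] g_sym[OF q, of "Dv N2 q" "N2 q"] by (simp_all add: pu_def pv_def)
qed

lemmas frame_derivatives = gauss_formulas weingarten_formulas_N1 N2_derivative_components

subsection \<open>Structure equations\<close>

lemma curvature_identity:
  assumes A: "smooth_field A" and B: "smooth_field B" and p: "p \<in> U"
  shows "dd (1,0) (\<lambda>q. g q (Dv A q) (B q)) p - dd (0,1) (\<lambda>q. g q (Du A q) (B q)) p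
       = g p (Dv A p) (Du B p) - g p (Du A p) (Dv B p)
         + L0 * (g p (T2 F p) (A p) * g p (T1 F p) (B p) - g p (T1 F p) (A p) * g p (T2 F p) (B p))"
proof -
  have "dd (1,0) (\<lambda>q. g q (Dv A q) (B q)) p = g p (Du (Dv A) p) (B p) + g p (Dv A p) (Du B p)"
    and "dd (0,1) (\<lambda>q. g q (Du A q) (B q)) p = g p (Dv (Du A) p) (B p) + g p (Du A p) (Dv B p)"
    using has_dd_imp_dd[OF has_dd_g_Dcov[OF A B p]] by simp_all
  moreover have "g p (Du (Dv A) p) (B p) - g p (Dv (Du A) p) (B p)
      = g p (Rvec h (F p) (T1 F p) (T2 F p) (A p)) (B p)"
    using Dcov_commutator_uv[OF A p] by (simp add: hin_lin[symmetric])
  ultimately show ?thesis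
    using space_form_curvature[OF space_form F_in_V[OF p]] by simp
qed

lemma coefficient_has_dd:
  assumes A: "smooth_field A" and B: "smooth_field B" and p: "p \<in> U"
    and b: "b \<in> Basis" and c: "c \<in> Basis"
    and eq: "\<forall>q\<in>U. g q (Dcov h F b A q) (B q) = cf q * E q"
  shows "has_dd cf c p (dd c cf p)"
proof -
  obtain D where "has_dd (\<lambda>q. g q (Dcov h F b A q) (B q)) c p D"
    using has_dd_g_Dcov[OF A B p b c] by blast
  from has_dd_divide[OF this has_dd_E[OF p c]]
  have "has_dd (\<lambda>q. g q (Dcov h F b A q) (B q) / E q) c p
      ((D * E p - g p (Dcov h F b A p) (B p) * (2 * dd c lam p * E p)) / (E p * E p))"
    by simp
  then have "has_dd cf c p ((D * E p - g p (Dcov h F b A p) (B p) * (2 * dd c lam p * E p)) / (E p * E p))"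
    by (rule has_dd_transform_open[OF U_open p, rotated]) (simp add: eq)
  then show ?thesis
    using has_dd_imp_dd by metis
qed

lemma structure_equation:
  assumes A: "smooth_field A" and B: "smooth_field B" and p: "p \<in> U"
    and cv: "\<forall>q\<in>U. g q (Dv A q) (B q) = cv q * E q" and cu: "\<forall>q\<in>U. g q (Du A q) (B q) = cu q * E q"
  shows "(pu cv p + 2 * cv p * pu lam p - pv cu p - 2 * cu p * pv lam p) * E p
       = g p (Dv A p) (Du B p) - g p (Du A p) (Dv B p)
         + L0 * (g p (T2 F p) (A p) * g p (T1 F p) (B p) - g p (T1 F p) (A p) * g p (T2 F p) (B p))"
proof -
  have "dd (1,0) (\<lambda>q. g q (Dv A q) (B q)) p = dd (1,0) (\<lambda>q. cv q * E q) p"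
    using cv p by (intro dd_cong[OF U_open]) auto
  also have "\<dots> = pu cv p * E p + cv p * (2 * pu lam p * E p)"
    using has_dd_imp_dd[OF has_dd_mult[OF coefficient_has_dd[OF A B p _ _ cv] has_dd_E[OF p]]]
    by (simp add: pu_def)
  finally have 1: "dd (1,0) (\<lambda>q. g q (Dv A q) (B q)) p = pu cv p * E p + cv p * (2 * pu lam p * E p)" .
  have "dd (0,1) (\<lambda>q. g q (Du A q) (B q)) p = dd (0,1) (\<lambda>q. cu q * E q) p"
    using cu p by (intro dd_cong[OF U_open]) auto
  also have "\<dots> = pv cu p * E p + cu p * (2 * pv lam p * E p)"
    using has_dd_imp_dd[OF has_dd_mult[OF coefficient_has_dd[OF A B p _ _ cu] has_dd_E[OF p]]]
    by (simp add: pv_def)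
  finally have 2: "dd (0,1) (\<lambda>q. g q (Du A q) (B q)) p = pv cu p * E p + cu p * (2 * pv lam p * E p)" .
  show ?thesis
    using curvature_identity[OF A B p] 1 2 by (simp add: algebra_simps)
qed

lemma connection_coefficients:
  "\<forall>q\<in>U. g q (Dv (T1 F) q) (T2 F q) = pu lam q * E q"
  "\<forall>q\<in>U. g q (Du (T1 F) q) (T2 F q) = - pv lam q * E q"
  "\<forall>q\<in>U. g q (Dv (T1 F) q) (N1 q) = \<alpha>2 q * E q"
  "\<forall>q\<in>U. g q (Du (T1 F) q) (N1 q) = \<alpha>1 q * E q"
  "\<forall>q\<in>U. g q (Dv (T1 F) q) (N2 q) = \<beta>2 q * E q"
  "\<forall>q\<in>U. g q (Du (T1 F) q) (N2 q) = \<beta>1 q * E q"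
  "\<forall>q\<in>U. g q (Dv (T2 F) q) (N1 q) = \<alpha>3 q * E q"
  "\<forall>q\<in>U. g q (Du (T2 F) q) (N1 q) = \<alpha>2 q * E q"
  "\<forall>q\<in>U. g q (Dv (T2 F) q) (N2 q) = \<beta>3 q * E q"
  "\<forall>q\<in>U. g q (Du (T2 F) q) (N2 q) = \<beta>2 q * E q"
  "\<forall>q\<in>U. g q (Dv N1 q) (N2 q) = \<mu>2 q * E q"
  "\<forall>q\<in>U. g q (Du N1 q) (N2 q) = \<mu>1 q * E q"
  using gauss_formulas weingarten_formulas_N1 frame_products by (simp_all add: hin_lin)

lemma coefficients_have_dd:
  assumes p: "p \<in> U" and c: "c \<in> Basis"
  shows "has_dd \<alpha>1 c p (dd c \<alpha>1 p)" "has_dd \<alpha>2 c p (dd c \<alpha>2 p)" "has_dd \<alpha>3 c p (dd c \<alpha>3 p)"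
    "has_dd \<beta>1 c p (dd c \<beta>1 p)" "has_dd \<beta>2 c p (dd c \<beta>2 p)" "has_dd \<beta>3 c p (dd c \<beta>3 p)"
    "has_dd \<mu>1 c p (dd c \<mu>1 p)" "has_dd \<mu>2 c p (dd c \<mu>2 p)"
    "has_dd (pu lam) c p (dd c (pu lam) p)" "has_dd (pv lam) c p (dd c (pv lam) p)"
  using coefficient_has_dd[OF smooth_T1 smooth_N1 p _ c connection_coefficients(4)]
    coefficient_has_dd[OF smooth_T1 smooth_N1 p _ c connection_coefficients(3)]
    coefficient_has_dd[OF smooth_T2 smooth_N1 p _ c connection_coefficients(7)]
    coefficient_has_dd[OF smooth_T1 smooth_N2 p _ c connection_coefficients(6)]
    coefficient_has_dd[OF smooth_T1 smooth_N2 p _ c connection_coefficients(5)]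
    coefficient_has_dd[OF smooth_T2 smooth_N2 p _ c connection_coefficients(9)]
    coefficient_has_dd[OF smooth_N1 smooth_N2 p _ c connection_coefficients(12)]
    coefficient_has_dd[OF smooth_N1 smooth_N2 p _ c connection_coefficients(11)]
    Cinf_on_has_dd[OF Cinf_on_dd[OF lam_smooth Basis_real_pair(1)] c p]
    Cinf_on_has_dd[OF Cinf_on_dd[OF lam_smooth Basis_real_pair(2)] c p]
  by (simp_all add: pu_def pv_def)

lemma gauss_equation:
  assumes p: "p \<in> U"
  shows "pu (pu lam) p + pv (pv lam) p
     = \<alpha>2 p * \<alpha>2 p + \<beta>2 p * \<beta>2 p - \<alpha>1 p * \<alpha>3 p - \<beta>1 p * \<beta>3 p - L0 * E p"
proof -
  have "pv (\<lambda>q. - pv lam q) p = - pv (pv lam) p"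
    using has_dd_imp_dd[OF has_dd_minus[OF coefficients_have_dd(10)[OF p]]] by (simp add: pv_def)
  moreover have "g p (Dv (T1 F) p) (Du (T2 F) p)
      = E p * (pv lam p * pv lam p + pu lam p * pu lam p + \<alpha>2 p * \<alpha>2 p + \<beta>2 p * \<beta>2 p)"
    and "g p (Du (T1 F) p) (Dv (T2 F) p)
      = E p * (- pu lam p * pu lam p - pv lam p * pv lam p + \<alpha>1 p * \<alpha>3 p + \<beta>1 p * \<beta>3 p)"
    by (simp_all add: frame_derivatives[OF p] hin_lin frame_products[OF p] algebra_simps)
  ultimately have "E p * (pu (pu lam) p + pv (pv lam) p
      - (\<alpha>2 p * \<alpha>2 p + \<beta>2 p * \<beta>2 p - \<alpha>1 p * \<alpha>3 p - \<beta>1 p * \<beta>3 p - L0 * E p)) = 0"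
    using structure_equation[OF smooth_T1 smooth_T2 p connection_coefficients(1,2)] frame_products[OF p]
    by algebra
  then show ?thesis by simp
qed

lemma codazzi_equations:
  assumes p: "p \<in> U"
  shows "pv \<alpha>1 p - pu \<alpha>2 p = pu lam p * \<alpha>2 p + pv lam p * \<alpha>3 p + \<beta>1 p * \<mu>2 p - \<beta>2 p * \<mu>1 p"
    and "pv \<beta>1 p - pu \<beta>2 p = pu lam p * \<beta>2 p + pv lam p * \<beta>3 p + \<alpha>2 p * \<mu>1 p - \<alpha>1 p * \<mu>2 p"
    and "pu \<alpha>3 p - pv \<alpha>2 p = pu lam p * \<alpha>1 p + pv lam p * \<alpha>2 p + \<beta>3 p * \<mu>1 p - \<beta>2 p * \<mu>2 p"
    and "pu \<beta>3 p - pv \<beta>2 p = pu lam p * \<beta>1 p + pv lam p * \<beta>2 p - \<alpha>3 p * \<mu>1 p + \<alpha>2 p * \<mu>2 p"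
proof -
  note derivs = frame_derivatives[OF p] hin_lin frame_products[OF p] algebra_simps
  have "g p (Dv (T1 F) p) (Du N1 p) = E p * (- pv lam p * \<alpha>1 p + \<beta>2 p * \<mu>1 p)"
    and "g p (Du (T1 F) p) (Dv N1 p) = E p * (- pu lam p * \<alpha>2 p + pv lam p * \<alpha>3 p + \<alpha>1 p * pv lam p + \<beta>1 p * \<mu>2 p)"
    by (simp_all add: derivs)
  then have "E p * (pv \<alpha>1 p - pu \<alpha>2 p
      - (pu lam p * \<alpha>2 p + pv lam p * \<alpha>3 p + \<beta>1 p * \<mu>2 p - \<beta>2 p * \<mu>1 p)) = 0"
    using structure_equation[OF smooth_T1 smooth_N1 p connection_coefficients(3,4)] frame_products[OF p]
    by algebra
  then show "pv \<alpha>1 p - pu \<alpha>2 p = pu lam p * \<alpha>2 p + pv lam p * \<alpha>3 p + \<beta>1 p * \<mu>2 p - \<beta>2 p * \<mu>1 p"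
    by simp
  have "g p (Dv (T1 F) p) (Du N2 p) = E p * (- pv lam p * \<beta>1 p - \<alpha>2 p * \<mu>1 p)"
    and "g p (Du (T1 F) p) (Dv N2 p) = E p * (- pu lam p * \<beta>2 p + pv lam p * \<beta>3 p - \<alpha>1 p * \<mu>2 p + \<beta>1 p * pv lam p)"
    by (simp_all add: derivs)
  then have "E p * (pv \<beta>1 p - pu \<beta>2 p
      - (pu lam p * \<beta>2 p + pv lam p * \<beta>3 p + \<alpha>2 p * \<mu>1 p - \<alpha>1 p * \<mu>2 p)) = 0"
    using structure_equation[OF smooth_T1 smooth_N2 p connection_coefficients(5,6)] frame_products[OF p]
    by algebra
  then show "pv \<beta>1 p - pu \<beta>2 p = pu lam p * \<beta>2 p + pv lam p * \<beta>3 p + \<alpha>2 p * \<mu>1 p - \<alpha>1 p * \<mu>2 p"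
    by simp
  have "g p (Dv (T2 F) p) (Du N1 p) = E p * (pu lam p * \<alpha>1 p - pv lam p * \<alpha>2 p + \<alpha>3 p * pu lam p + \<beta>3 p * \<mu>1 p)"
    and "g p (Du (T2 F) p) (Dv N1 p) = E p * (- pu lam p * \<alpha>3 p + \<beta>2 p * \<mu>2 p)"
    by (simp_all add: derivs)
  then have "E p * (pu \<alpha>3 p - pv \<alpha>2 p
      - (pu lam p * \<alpha>1 p + pv lam p * \<alpha>2 p + \<beta>3 p * \<mu>1 p - \<beta>2 p * \<mu>2 p)) = 0"
    using structure_equation[OF smooth_T2 smooth_N1 p connection_coefficients(7,8)] frame_products[OF p]
    by algebra
  then show "pu \<alpha>3 p - pv \<alpha>2 p = pu lam p * \<alpha>1 p + pv lam p * \<alpha>2 p + \<beta>3 p * \<mu>1 p - \<beta>2 p * \<mu>2 p"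
    by simp
  have "g p (Dv (T2 F) p) (Du N2 p) = E p * (pu lam p * \<beta>1 p - pv lam p * \<beta>2 p - \<alpha>3 p * \<mu>1 p + \<beta>3 p * pu lam p)"
    and "g p (Du (T2 F) p) (Dv N2 p) = E p * (- pu lam p * \<beta>3 p - \<alpha>2 p * \<mu>2 p)"
    by (simp_all add: derivs)
  then have "E p * (pu \<beta>3 p - pv \<beta>2 p
      - (pu lam p * \<beta>1 p + pv lam p * \<beta>2 p - \<alpha>3 p * \<mu>1 p + \<alpha>2 p * \<mu>2 p)) = 0"
    using structure_equation[OF smooth_T2 smooth_N2 p connection_coefficients(9,10)] frame_products[OF p]
    by algebra
  then show "pu \<beta>3 p - pv \<beta>2 p = pu lam p * \<beta>1 p + pv lam p * \<beta>2 p - \<alpha>3 p * \<mu>1 p + \<alpha>2 p * \<mu>2 p"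
    by simp
qed

lemma ricci_equation:
  assumes p: "p \<in> U"
  shows "pu \<mu>2 p - pv \<mu>1 p = \<alpha>2 p * \<beta>1 p + \<alpha>3 p * \<beta>2 p - \<alpha>1 p * \<beta>2 p - \<alpha>2 p * \<beta>3 p"
proof -
  have "g p (Dv N1 p) (Du N2 p) = E p * (\<alpha>2 p * \<beta>1 p + \<alpha>3 p * \<beta>2 p - pv lam p * \<mu>1 p + \<mu>2 p * pu lam p)"
    and "g p (Du N1 p) (Dv N2 p) = E p * (\<alpha>1 p * \<beta>2 p + \<alpha>2 p * \<beta>3 p - pu lam p * \<mu>2 p + \<mu>1 p * pv lam p)"
    by (simp_all add: frame_derivatives[OF p] hin_lin frame_products[OF p] algebra_simps)
  then have "E p * (pu \<mu>2 p - pv \<mu>1 p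
      - (\<alpha>2 p * \<beta>1 p + \<alpha>3 p * \<beta>2 p - \<alpha>1 p * \<beta>2 p - \<alpha>2 p * \<beta>3 p)) = 0"
    using structure_equation[OF smooth_N1 smooth_N2 p connection_coefficients(11,12)] frame_products[OF p]
    by algebra
  then show ?thesis by simp
qed

lemma combination_derivatives:
  assumes p: "p \<in> U"
  shows "pu (\<lambda>q. pu lam q - s * \<mu>2 q) p = pu (pu lam) p - s * pu \<mu>2 p"
    and "pv (\<lambda>q. pv lam q - s * \<mu>1 q) p = pv (pv lam) p - s * pv \<mu>1 p"
    and "pu (\<lambda>q. \<alpha>2 q + s * \<beta>3 q) p = pu \<alpha>2 p + s * pu \<beta>3 p"
    and "pu (\<lambda>q. \<beta>2 q + s * \<alpha>3 q) p = pu \<beta>2 p + s * pu \<alpha>3 p"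
    and "pv (\<lambda>q. \<alpha>2 q + s * \<beta>1 q) p = pv \<alpha>2 p + s * pv \<beta>1 p"
    and "pv (\<lambda>q. \<beta>2 q + s * \<alpha>1 q) p = pv \<beta>2 p + s * pv \<alpha>1 p"
  using coefficients_have_dd[OF p, of "(1,0)"] coefficients_have_dd[OF p, of "(0,1)"]
  by (simp_all add: pu_def pv_def dd_add_cmult dd_diff_cmult)

end

theorem proposition2p1:
  fixes V :: "(real^4) set" and h :: metric4 and L0 :: real
    and U :: "(real \<times> real) set" and F :: "real \<times> real \<Rightarrow> real^4"
    and lam :: "real \<times> real \<Rightarrow> real"
    and N1 N2 :: "real \<times> real \<Rightarrow> real^4"
    and \<alpha>1 \<alpha>2 \<alpha>3 \<beta>1 \<beta>2 \<beta>3 \<mu>1 \<mu>2 :: "real \<times> real \<Rightarrow> real"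
  assumes V_open: "open V"
    and metric: "riemannian_metric_on V h"
    and space_form: "constant_sectional_curvature_on V h L0"
    and U_open: "open U"
    and F_into: "F ` U \<subseteq> V"
    and F_smooth: "\<forall>k. Cinf_on U (\<lambda>p. F p $ k)"
    and immersion: "\<forall>p\<in>U. \<forall>a b. a *\<^sub>R T1 F p + b *\<^sub>R T2 F p = 0 \<longrightarrow> a = 0 \<and> b = 0"
    and lam_smooth: "Cinf_on U lam"
    and conf1: "\<forall>p\<in>U. hin h (F p) (T1 F p) (T1 F p) = exp (2 * lam p)"
    and conf2: "\<forall>p\<in>U. hin h (F p) (T2 F p) (T2 F p) = exp (2 * lam p)"
    and conf12: "\<forall>p\<in>U. hin h (F p) (T1 F p) (T2 F p) = 0"
    and N_smooth: "\<forall>k. Cinf_on U (\<lambda>p. N1 p $ k) \<and> Cinf_on U (\<lambda>p. N2 p $ k)"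
    and N_normal: "\<forall>p\<in>U. hin h (F p) (N1 p) (T1 F p) = 0 \<and> hin h (F p) (N1 p) (T2 F p) = 0
                       \<and> hin h (F p) (N2 p) (T1 F p) = 0 \<and> hin h (F p) (N2 p) (T2 F p) = 0"
    and N_frame: "\<forall>p\<in>U. hin h (F p) (N1 p) (N1 p) = exp (2 * lam p)
                       \<and> hin h (F p) (N2 p) (N2 p) = exp (2 * lam p)
                       \<and> hin h (F p) (N1 p) (N2 p) = 0"
    and sigma11: "\<forall>p\<in>U. sff h F (1, 0) (T1 F) p = \<alpha>1 p *\<^sub>R N1 p + \<beta>1 p *\<^sub>R N2 p"
    and sigma12: "\<forall>p\<in>U. sff h F (1, 0) (T2 F) p = \<alpha>2 p *\<^sub>R N1 p + \<beta>2 p *\<^sub>R N2 p"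
    and sigma22: "\<forall>p\<in>U. sff h F (0, 1) (T2 F) p = \<alpha>3 p *\<^sub>R N1 p + \<beta>3 p *\<^sub>R N2 p"
    and nconu: "\<forall>p\<in>U. ncon h F (1, 0) N1 p = pu lam p *\<^sub>R N1 p + \<mu>1 p *\<^sub>R N2 p"
    and nconv: "\<forall>p\<in>U. ncon h F (0, 1) N1 p = pv lam p *\<^sub>R N1 p + \<mu>2 p *\<^sub>R N2 p"
  shows "\<forall>p\<in>U.
     (let W = (\<lambda>s::real. \<lambda>q. \<alpha>2 q + s * \<beta>1 q);
          X = (\<lambda>s::real. \<lambda>q. \<alpha>2 q + s * \<beta>3 q);
          Y = (\<lambda>s::real. \<lambda>q. \<beta>2 q + s * \<alpha>1 q);
          Z = (\<lambda>s::real. \<lambda>q. \<beta>2 q + s * \<alpha>3 q);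
          \<phi> = (\<lambda>s::real. \<lambda>q. pu lam q - s * \<mu>2 q);
          \<psi> = (\<lambda>s::real. \<lambda>q. pv lam q - s * \<mu>1 q)
      in W 1 p + W (-1) p = X 1 p + X (-1) p
       \<and> Y 1 p + Y (-1) p = Z 1 p + Z (-1) p
       \<and> (\<forall>s\<in>{1, -1::real}.
            W (-s) p * X s p + Y s p * Z (-s) p
              = L0 * exp (2 * lam p) + pu (\<phi> s) p + pv (\<psi> (-s)) p
          \<and> pv (Y s) p - s * pu (X s) p = s * W (-s) p * \<phi> s p - Z (-s) p * \<psi> (-s) p
          \<and> pv (W (-s)) p + s * pu (Z (-s)) p = - s * Y s p * \<phi> s p - X s p * \<psi> (-s) p))"
proof
  interpret conformal_surface V h L0 U F lam N1 N2 \<alpha>1 \<alpha>2 \<alpha>3 \<beta>1 \<beta>2 \<beta>3 \<mu>1 \<mu>2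
    by unfold_locales (fact V_open metric space_form U_open F_into F_smooth lam_smooth conf1 conf2
        conf12 N_smooth N_normal N_frame sigma11 sigma12 sigma22 nconu nconv)+
  fix p assume p: "p \<in> U"
  show "let W = (\<lambda>s::real. \<lambda>q. \<alpha>2 q + s * \<beta>1 q); X = (\<lambda>s::real. \<lambda>q. \<alpha>2 q + s * \<beta>3 q);
          Y = (\<lambda>s::real. \<lambda>q. \<beta>2 q + s * \<alpha>1 q); Z = (\<lambda>s::real. \<lambda>q. \<beta>2 q + s * \<alpha>3 q);
          \<phi> = (\<lambda>s::real. \<lambda>q. pu lam q - s * \<mu>2 q); \<psi> = (\<lambda>s::real. \<lambda>q. pv lam q - s * \<mu>1 q)
      in W 1 p + W (-1) p = X 1 p + X (-1) p \<and> Y 1 p + Y (-1) p = Z 1 p + Z (-1) p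
       \<and> (\<forall>s\<in>{1, -1::real}.
            W (-s) p * X s p + Y s p * Z (-s) p = L0 * exp (2 * lam p) + pu (\<phi> s) p + pv (\<psi> (-s)) p
          \<and> pv (Y s) p - s * pu (X s) p = s * W (-s) p * \<phi> s p - Z (-s) p * \<psi> (-s) p
          \<and> pv (W (-s)) p + s * pu (Z (-s)) p = - s * Y s p * \<phi> s p - X s p * \<psi> (-s) p)"
    using gauss_equation[OF p] codazzi_equations[OF p] ricci_equation[OF p]
    unfolding Let_def combination_derivatives[OF p] by (simp add: algebra_simps)
qed

end
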